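(* Let $\mathcal{D}$ be a generalised dyadic system, and let $\mu,\nu$ be Radon measures on $\mathbb{R}$ with $\mu$ finite and $\nu$ dyadically doubling relative to $\mathcal{D}$. Let $\mu_a$ be the absolutely continuous part of $\mu$ with respect to $\nu$. Then the square function $$\mathcal{S}^2_{\mathcal{D},\nu}(\mu)(x) := \sum_{I\in\mathcal{D}}\alpha^2_{\mu,\nu}(I)\chi_I(x)$$ is finite for $\mu_a$-almost every $x\in\mathbb{R}$.
   Context: A generalised dyadic system is a family $\mathcal{D}=\bigcup_{k\ge0}\mathcal{D}_k$ of half-open intervals such that each $\mathcal{D}_k$ is a partition of $\mathbb{R}$ into intervals of length $2^{-k}$, and each $I\in\mathcal{D}_k$ is the union of two intervals of $\mathcal{D}_{k+1}$ (its children). $\nu$ is dyadically doubling relative to $\mathcal{D}$ if there is $C$ with $\nu(\hat I)\le C\nu(I)$ for every $I\in\mathcal{D}_k$, $k\ge1$, where $\hat I$ is the interval of $\mathcal{D}_{k-1}$ containing $I$. Wasserstein distance: $\mathbb{W}_1(\nu_1,\nu_2) := \sup_\psi |\int\psi\,d\nu_1 - \int\psi\,d\nu_2|$ over all $1$-Lipschitz $\psi\colon\mathbb{R}\to\mathbb{R}$ supported on $[0,1]$. For an interval $I$, $T_I$ is the increasing affine map taking $\overline I$ onto $[0,1]$, $\mu_I := T_{I\sharp}(\mu|_I)/\mu(I)$, $\nu_I := T_{I\sharp}(\nu|_I)/\nu(I)$ (zero if the mass vanishes), $\alpha_{\mu,\nu}(I) := \mathbb{W}_1(\mu_I,\nu_I)$.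 *)

theory Defs
  imports "HOL-Probability.Probability"
begin

definition dyadic_system :: "(nat \<Rightarrow> real set set) \<Rightarrow> bool" where
  "dyadic_system D \<longleftrightarrow>
     (\<forall>k. (\<forall>I\<in>D k. \<exists>a. I = {a..<a + (1/2)^k}) \<and> (\<forall>x. \<exists>!I. I \<in> D k \<and> x \<in> I)) \<and>
     (\<forall>k. \<forall>I\<in>D k. \<exists>J1 J2. J1 \<in> D (Suc k) \<and> J2 \<in> D (Suc k) \<and> J1 \<noteq> J2 \<and> I = J1 \<union> J2)"

definition radon_measure :: "real measure \<Rightarrow> bool" where
  "radon_measure M \<longleftrightarrow> sets M = sets borel \<and> (\<forall>K. compact K \<longrightarrow> emeasure M K < \<infinity>)"

definition dyadically_doubling :: "(nat \<Rightarrow> real set set) \<Rightarrow> real measure \<Rightarrow> bool" where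
  "dyadically_doubling D nu \<longleftrightarrow>
     (\<exists>C::real. \<forall>k. \<forall>I\<in>D (Suc k). \<forall>J\<in>D k. I \<subseteq> J \<longrightarrow>
        emeasure nu J \<le> ennreal C * emeasure nu I)"

definition T_map :: "real set \<Rightarrow> real \<Rightarrow> real" where
  "T_map I x = (x - Inf I) / (Sup I - Inf I)"

definition normalized_measure :: "real measure \<Rightarrow> real set \<Rightarrow> real measure" where
  "normalized_measure mu I =
     (if emeasure mu I = 0 then null_measure borel
      else scale_measure (inverse (emeasure mu I))
             (distr (density mu (indicator I)) borel (T_map I)))"

definition wasserstein1 :: "real measure \<Rightarrow> real measure \<Rightarrow> real" where
  "wasserstein1 m1 m2 = Sup {\<bar>(\<integral>x. \<psi> x \<partial>m1) - (\<integral>x. \<psi> x \<partial>m2)\<bar> | \<psi>.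
      1-lipschitz_on UNIV \<psi> \<and> (\<forall>x. x \<notin> {0..1} \<longrightarrow> \<psi> x = 0)}"

definition alpha :: "real measure \<Rightarrow> real measure \<Rightarrow> real set \<Rightarrow> real" where
  "alpha mu nu I = wasserstein1 (normalized_measure mu I) (normalized_measure nu I)"

definition square_function ::
  "(nat \<Rightarrow> real set set) \<Rightarrow> real measure \<Rightarrow> real measure \<Rightarrow> real \<Rightarrow> ennreal" where
  "square_function D mu nu x =
     (\<Sum>\<^sub>\<infinity>I\<in>(\<Union>k. D k). ennreal ((alpha mu nu I)^2 * indicator I x))"

definition lebesgue_decomposition ::
  "real measure \<Rightarrow> real measure \<Rightarrow> real measure \<Rightarrow> real measure \<Rightarrow> bool" where
  "lebesgue_decomposition nu mu ma ms \<longleftrightarrow>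
     sets ma = sets borel \<and> sets ms = sets borel \<and>
     absolutely_continuous nu ma \<and>
     (\<exists>N\<in>sets borel. emeasure nu N = 0 \<and> emeasure ms (UNIV - N) = 0) \<and>
     (\<forall>A\<in>sets borel. emeasure mu A = emeasure ma A + emeasure ms A)"

end

theory Submission
  imports Defs
begin

text \<open>
  It suffices to work inside one unit cell Q. For n \<ge> 1 consider the points of Q all of whose
  dyadic cells I have density ratio \<open>\<mu>(I)/\<nu>(I)\<close> in [1/n, n]. Every such cell lies in the
  stopping-time tree of cells whose ancestors all have ratio in [1/n, n], and on such a tree
  \<open>\<Sum>\<^sub>I \<mu>(I) \<alpha>(I)\<^sup>2\<close> is finite. Hence the square function is \<open>\<mu>\<close>-integrable, so finite
  \<open>\<mu>\<close>-a.e., on these points; and \<open>\<mu>\<^sub>a\<close>-almost every point of Q is such a point for some n,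
  because the points lying in cells of arbitrarily small ratio form a \<open>\<mu>\<close>-null set and those
  lying in cells of zero \<open>\<nu>\<close>-mass or of arbitrarily large ratio form a \<open>\<nu>\<close>-null set
  (covering by maximal dyadic cells).

  The tree estimate: testing against a 1-Lipschitz \<open>\<psi>\<close> and sampling \<open>\<psi>\<close> at the left
  endpoints of the cells n generations below I bounds \<open>\<alpha>(I)\<close> by
  \<open>\<Sum>\<^sub>i 2\<^sup>-\<^sup>i \<Sum>\<^sub>J |\<mu>(J)/\<mu>(I) - \<nu>(J)/\<nu>(I)|\<close> up to \<open>O(2\<^sup>-\<^sup>N)\<close>. Writing
  \<open>\<mu>(J) \<approx> \<rho>(J) \<nu>(J)\<close>, with \<open>\<rho>\<close> the density ratio frozen when leaving the tree, splits
  this into a martingale part, whose square is controlled by the increments of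
  \<open>\<Sum>\<^sub>J \<nu>(J) \<rho>(J)\<^sup>2\<close> (bounded thanks to doubling), and a stopping part, controlled by the
  \<open>\<mu>\<close>-mass leaving the tree; both telescope when summed over the tree.
\<close>

lemma sets_radon_measure: "radon_measure M \<Longrightarrow> sets M = sets borel"
  unfolding radon_measure_def by auto

lemma emeasure_le_cmult_iff:
  assumes "emeasure M A \<noteq> \<infinity>" "emeasure N B \<noteq> \<infinity>" "0 \<le> c"
  shows "emeasure M A \<le> ennreal c * emeasure N B \<longleftrightarrow> measure M A \<le> c * measure N B"
  using assms by (simp add: emeasure_eq_ennreal_measure ennreal_mult'[symmetric] ennreal_le_iff)

lemma INT_null_sets_of_le:
  fixes A :: "nat \<Rightarrow> 'a set"
  assumes A: "\<And>n. A n \<in> sets M" and le: "\<And>n. emeasure M (A n) \<le> ennreal (c / real (Suc n))"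
  shows "(\<Inter>n. A n) \<in> null_sets M"
proof -
  have "(\<lambda>n. ennreal (c / real (Suc n))) \<longlonglongrightarrow> ennreal 0"
    by (intro tendsto_ennrealI LIMSEQ_Suc[OF lim_const_over_n])
  moreover have "emeasure M (\<Inter>n. A n) \<le> ennreal (c / real (Suc n))" for n
    using emeasure_mono[of "\<Inter>n. A n" "A n" M] A le[of n] by (auto intro: order_trans)
  ultimately have "emeasure M (\<Inter>n. A n) \<le> 0"
    by (intro LIMSEQ_le_const) auto
  then show ?thesis using A by (simp add: null_sets_def sets.countable_INT')
qed

lemma lebesgue_decomposition_absolutely_continuous:
  assumes "lebesgue_decomposition nu mu ma ms" "sets mu = sets borel"
  shows "absolutely_continuous mu ma"
  using assms unfolding lebesgue_decomposition_def absolutely_continuous_def null_sets_def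
  by (auto simp: add_eq_0_iff_both_eq_0)

lemma integral_scale_measure:
  fixes f :: "'a \<Rightarrow> real"
  assumes c: "0 \<le> c" and f: "f \<in> borel_measurable N"
  shows "integral\<^sup>L (scale_measure (ennreal c) N) f = c * integral\<^sup>L N f"
proof -
  have e: "scale_measure (ennreal c) N = density N (\<lambda>_. c)"
  proof (rule measure_eqI)
    show "sets (scale_measure (ennreal c) N) = sets (density N (\<lambda>_. c))" by simp
    fix A assume "A \<in> sets (scale_measure (ennreal c) N)"
    then have A: "A \<in> sets N" by simp
    show "emeasure (scale_measure (ennreal c) N) A = emeasure (density N (\<lambda>_. c)) A"
      using A by (simp add: emeasure_density nn_integral_cmult_indicator)
  qed
  have "integral\<^sup>L (density N (\<lambda>_. c)) f = integral\<^sup>L N (\<lambda>x. c *\<^sub>R f x)"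
    by (rule integral_density[OF f]) (auto simp: c)
  then show ?thesis unfolding e by simp
qed

lemma T_map_measurable: "T_map I \<in> borel_measurable borel"
proof -
  have e: "T_map I = (\<lambda>x. (x - Inf I) * (1 / (Sup I - Inf I)))" unfolding T_map_def
    by (rule ext) simp
  have "continuous_on UNIV (\<lambda>x. (x - Inf I) * (1 / (Sup I - Inf I)))" by (intro continuous_intros)
  then show ?thesis unfolding e by (rule borel_measurable_continuous_onI)
qed

definition W1_test :: "(real \<Rightarrow> real) \<Rightarrow> bool" where
  "W1_test \<psi> \<longleftrightarrow> 1-lipschitz_on UNIV \<psi> \<and> (\<forall>x. x \<notin> {0..1} \<longrightarrow> \<psi> x = 0)"

lemma W1_testD: "W1_test \<psi> \<Longrightarrow> \<bar>\<psi> a - \<psi> b\<bar> \<le> \<bar>a - b\<bar>"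
  unfolding W1_test_def using lipschitz_onD[of 1 UNIV \<psi> a b] by (simp add: dist_real_def)

lemma W1_test_bounded:
  assumes "W1_test \<psi>"
  shows "\<bar>\<psi> t\<bar> \<le> 2"
proof (cases "t \<in> {0..1}")
  case True
  have z: "\<psi> (-1) = 0" using assms unfolding W1_test_def by auto
  have "\<bar>\<psi> t - \<psi> (-1)\<bar> \<le> \<bar>t - (-1)\<bar>" by (rule W1_testD[OF assms])
  then show ?thesis using True z by auto
next
  case False then show ?thesis using assms unfolding W1_test_def by auto
qed

lemma W1_test_measurable:
  assumes "W1_test \<psi>"
  shows "\<psi> \<in> borel_measurable borel"
proof -
  have "continuous_on UNIV \<psi>" using assms unfolding W1_test_def
    by (intro lipschitz_on_continuous_on) auto
  then show ?thesis by (rule borel_measurable_continuous_onI)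
qed

lemma wasserstein1_bounds:
  fixes m1 m2 :: "real measure"
  assumes "\<And>\<psi>. W1_test \<psi> \<Longrightarrow> \<bar>(\<integral>x. \<psi> x \<partial>m1) - (\<integral>x. \<psi> x \<partial>m2)\<bar> \<le> B"
  shows "0 \<le> wasserstein1 m1 m2" "wasserstein1 m1 m2 \<le> B"
proof -
  let ?S = "{\<bar>(\<integral>x. \<psi> x \<partial>m1) - (\<integral>x. \<psi> x \<partial>m2)\<bar> :: real | \<psi>.
      1-lipschitz_on UNIV \<psi> \<and> (\<forall>x. x \<notin> {0..1} \<longrightarrow> \<psi> x = 0)}"
  define \<psi>0 :: "real \<Rightarrow> real" where "\<psi>0 = (\<lambda>x. 0)"
  have "1-lipschitz_on UNIV \<psi>0" "\<forall>x. x \<notin> {0..1} \<longrightarrow> \<psi>0 x = 0"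
    "0 = \<bar>(\<integral>x. \<psi>0 x \<partial>m1) - (\<integral>x. \<psi>0 x \<partial>m2)\<bar>"
    by (auto simp: lipschitz_on_def \<psi>0_def)
  then have zero: "0 \<in> ?S" by blast
  have ub: "y \<le> B" if "y \<in> ?S" for y using that assms unfolding W1_test_def by blast
  show "wasserstein1 m1 m2 \<le> B" unfolding wasserstein1_def using zero ub by (intro cSup_least) auto
  show "0 \<le> wasserstein1 m1 m2" unfolding wasserstein1_def
    using zero ub by (intro cSup_upper2[of 0]) (auto simp: bdd_above_def)
qed

lemma weighted_Cauchy_Schwarz:
  fixes w x :: "'a \<Rightarrow> real"
  assumes "\<And>i. i \<in> S \<Longrightarrow> 0 \<le> w i"
  shows "(\<Sum>i\<in>S. w i * x i)^2 \<le> (\<Sum>i\<in>S. w i) * (\<Sum>i\<in>S. w i * (x i)^2)"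
proof -
  have "(\<Sum>i\<in>S. w i * x i)^2 = (\<Sum>i\<in>S. sqrt (w i) * (sqrt (w i) * x i))^2"
    using assms by (intro arg_cong[where f="\<lambda>t. t^2"] sum.cong refl)
      (simp add: real_sqrt_mult_self mult.assoc[symmetric])
  also have "\<dots> \<le> (\<Sum>i\<in>S. (sqrt (w i))^2) * (\<Sum>i\<in>S. (sqrt (w i) * x i)^2)"
    by (rule Cauchy_Schwarz_ineq_sum)
  also have "\<dots> = (\<Sum>i\<in>S. w i) * (\<Sum>i\<in>S. w i * (x i)^2)"
    using assms by (simp add: power_mult_distrib)
  finally show ?thesis .
qed

lemma square_sum3_le: "(a + b + c)^2 \<le> 3 * a^2 + 3 * b^2 + 3 * (c::real)^2"
proof -
  have "0 \<le> (a - b)^2 + (b - c)^2 + (a - c)^2" by simp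
  then show ?thesis by (simp add: power2_eq_square algebra_simps)
qed

lemma sum_shift_diff_le:
  fixes y :: "nat \<Rightarrow> real"
  assumes "\<And>n. a \<le> y n" "\<And>n. y n \<le> b"
  shows "(\<Sum>k<N. y (k+i) - y k) \<le> real i * (b - a)"
proof -
  have "(\<Sum>k<N. y (k+i) - y k) = (\<Sum>k<N. \<Sum>j<i. y (k + Suc j) - y (k + j))"
  proof (rule sum.cong[OF refl])
    fix k
    show "y (k+i) - y k = (\<Sum>j<i. y (k + Suc j) - y (k + j))"
      using sum_lessThan_telescope[of "\<lambda>j. y (k + j)" i] by simp
  qed
  also have "\<dots> = (\<Sum>j<i. \<Sum>k<N. y (k + Suc j) - y (k + j))" by (rule sum.swap)
  also have "\<dots> = (\<Sum>j<i. y (N + j) - y j)"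
  proof (rule sum.cong[OF refl])
    fix j
    show "(\<Sum>k<N. y (k + Suc j) - y (k + j)) = y (N + j) - y j"
      using sum_lessThan_telescope[of "\<lambda>k. y (k + j)" N] by simp
  qed
  also have "\<dots> \<le> (\<Sum>j<i. b - a)"
    using assms by (intro sum_mono diff_mono) auto
  also have "\<dots> = real i * (b - a)" by simp
  finally show ?thesis .
qed

lemma sum_half_powers: "(\<Sum>i<N. (1/2::real)^i) = 2 - 2 * (1/2)^N"
  by (induction N) (auto simp: field_simps)

lemma sum_half_powers_times: "(\<Sum>i<N. (1/2::real)^i * real i) = 2 - 2 * (real N + 1) * (1/2)^N"
proof (induction N)
  case 0 then show ?case by simp
next
  case (Suc N)
  have "(\<Sum>i<Suc N. (1/2::real)^i * real i) = (2 - 2 * (real N + 1) * (1/2)^N) + (1/2)^N * real N"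
    using Suc.IH by simp
  also have "\<dots> = 2 - 2 * (real (Suc N) + 1) * ((1/2) * (1/2)^N)" by (simp add: algebra_simps)
  also have "\<dots> = 2 - 2 * (real (Suc N) + 1) * (1/2)^(Suc N)" by simp
  finally show ?case .
qed

lemma sum_half_powers_times_le: "(\<Sum>i<N. (1/2::real)^i * real i) \<le> 2"
  using sum_half_powers_times[of N] by simp

lemma sum_half_powers_le: "(\<Sum>i<N. (1/2::real)^i) \<le> 2"
  using sum_half_powers[of N] by simp

lemma times_half_power_le_1: "real N * (1/2::real)^N \<le> 1"
proof -
  have "0 \<le> (\<Sum>i<N. (1/2::real)^i * real i)" by (intro sum_nonneg) auto
  then have "2 * ((real N + 1) * (1/2::real)^N) \<le> 2 * 1"
    using sum_half_powers_times[of N] by (simp add: algebra_simps)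
  then have "(real N + 1) * (1/2::real)^N \<le> 1" by linarith
  then show ?thesis by (rule order_trans[rotated]) (simp add: mult_right_mono)
qed

section \<open>Dyadic cells\<close>

locale dyadic =
  fixes D :: "nat \<Rightarrow> real set set"
  assumes dyadic_system: "dyadic_system D"
begin

lemma cell_eq_interval: "I \<in> D k \<Longrightarrow> \<exists>a. I = {a..<a + (1/2)^k}"
  using dyadic_system unfolding dyadic_system_def by auto

lemma ex1_cell: "\<exists>!I. I \<in> D k \<and> x \<in> I"
  using dyadic_system unfolding dyadic_system_def by auto

lemma cell_exists: "\<exists>I. I \<in> D k \<and> x \<in> I"
  using ex1_cell by blast

lemma cell_unique: "I \<in> D k \<Longrightarrow> J \<in> D k \<Longrightarrow> x \<in> I \<Longrightarrow> x \<in> J \<Longrightarrow> I = J"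
  using ex1_cell[of k x] by auto

lemma cell_children:
  "I \<in> D k \<Longrightarrow> \<exists>J1 J2. J1 \<in> D (Suc k) \<and> J2 \<in> D (Suc k) \<and> J1 \<noteq> J2 \<and> I = J1 \<union> J2"
  using dyadic_system unfolding dyadic_system_def by auto

lemma cell_nonempty: "I \<in> D k \<Longrightarrow> I \<noteq> {}"
  using cell_eq_interval[of I k] by auto

lemma cell_disjoint: "I \<in> D k \<Longrightarrow> J \<in> D k \<Longrightarrow> I \<noteq> J \<Longrightarrow> I \<inter> J = {}"
  using cell_unique[of I k J] by auto

lemma cell_eq_Inf: "I \<in> D k \<Longrightarrow> I = {Inf I..<Inf I + (1/2)^k}"
proof -
  assume "I \<in> D k"
  then obtain a where a: "I = {a..<a + (1/2)^k}" using cell_eq_interval by blast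
  have "Inf I = a" unfolding a by (rule cInf_atLeastLessThan) simp
  then show ?thesis using a by simp
qed

lemma Sup_cell: "I \<in> D k \<Longrightarrow> Sup I = Inf I + (1/2)^k"
proof -
  assume "I \<in> D k"
  then have "Sup I = Sup {Inf I..<Inf I + (1/2)^k}" using cell_eq_Inf by simp
  also have "\<dots> = Inf I + (1/2)^k" by (rule cSup_atLeastLessThan) simp
  finally show ?thesis .
qed

lemma Inf_in_cell: "I \<in> D k \<Longrightarrow> Inf I \<in> I"
proof -
  assume "I \<in> D k"
  moreover have "Inf I \<in> {Inf I..<Inf I + (1/2::real)^k}" by simp
  ultimately show ?thesis using cell_eq_Inf by blast
qed

lemma cell_level_unique: "I \<in> D k \<Longrightarrow> I \<in> D k' \<Longrightarrow> k = k'"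
  using Sup_cell[of I k] Sup_cell[of I k'] power_inject_exp'[of "1/2::real" k k'] by simp

lemma cell_level_le:
  assumes I: "I \<in> D k" and J: "J \<in> D j" and sub: "I \<subseteq> J"
  shows "j \<le> k"
proof (rule ccontr)
  assume "\<not> j \<le> k"
  then have lt: "(1/2::real)^j < (1/2)^k" by (intro power_strict_decreasing) auto
  have eI: "I = {Inf I..<Inf I + (1/2)^k}" and eJ: "J = {Inf J..<Inf J + (1/2)^j}"
    using cell_eq_Inf I J by blast+
  have "Inf I \<in> J" using Inf_in_cell[OF I] sub by blast
  then have "Inf J \<le> Inf I" "Inf I < Inf J + (1/2)^j" using eJ by (metis atLeastLessThan_iff)+
  then have "Inf J + (1/2)^j \<in> {Inf I..<Inf I + (1/2)^k}"
    using lt by (simp only: atLeastLessThan_iff) linarith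
  then have "Inf J + (1/2)^j \<in> J" using eI sub by blast
  then show False using eJ by (metis atLeastLessThan_iff less_irrefl)
qed

lemma countable_cells_0: "countable (D 0)"
proof -
  have "inj_on (\<lambda>Q. \<lfloor>Inf Q\<rfloor>) (D 0)"
  proof (rule inj_onI)
    fix Q1 Q2 assume Q1: "Q1 \<in> D 0" and Q2: "Q2 \<in> D 0" and e: "\<lfloor>Inf Q1\<rfloor> = \<lfloor>Inf Q2\<rfloor>"
    have e1: "Q1 = {Inf Q1..<Inf Q1 + 1}" and e2: "Q2 = {Inf Q2..<Inf Q2 + 1}"
      using cell_eq_Inf[OF Q1] cell_eq_Inf[OF Q2] by simp_all
    have d: "\<bar>Inf Q1 - Inf Q2\<bar> < 1" using e by linarith
    have "Inf Q2 \<in> Q1 \<or> Inf Q1 \<in> Q2"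
    proof (cases "Inf Q1 \<le> Inf Q2")
      case True
      then show ?thesis using d by (subst e1) auto
    next
      case False
      then show ?thesis using d by (subst e2) auto
    qed
    then show "Q1 = Q2"
      using cell_unique[OF Q1 Q2] Inf_in_cell[OF Q1] Inf_in_cell[OF Q2] by blast
  qed
  then show ?thesis by (rule countable_image_inj_on[rotated]) simp
qed

lemma parent_exists: "J \<in> D (Suc k) \<Longrightarrow> \<exists>I\<in>D k. J \<subseteq> I"
proof -
  assume J: "J \<in> D (Suc k)"
  then obtain b where b: "b \<in> J" using cell_nonempty by blast
  obtain I where I: "I \<in> D k" "b \<in> I" using cell_exists by blast
  obtain J1 J2 where c: "J1 \<in> D (Suc k)" "J2 \<in> D (Suc k)" "I = J1 \<union> J2"
    using cell_children[OF I(1)] by blast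
  have "J = J1 \<or> J = J2"
    using I(2) c(3) cell_unique[OF J c(1) b] cell_unique[OF J c(2) b] by blast
  then show ?thesis using I(1) c(3) by blast
qed

lemma ancestor_exists: "J \<in> D m \<Longrightarrow> k \<le> m \<Longrightarrow> \<exists>I\<in>D k. J \<subseteq> I"
proof (induction m arbitrary: J)
  case 0
  then show ?case by (intro bexI[of _ J]) auto
next
  case (Suc m)
  show ?case
  proof (cases "k = Suc m")
    case True
    then show ?thesis using Suc.prems(1) by (intro bexI[of _ J]) auto
  next
    case False
    then have k: "k \<le> m" using Suc.prems(2) by simp
    obtain P where P: "P \<in> D m" "J \<subseteq> P" using parent_exists[OF Suc.prems(1)] by blast
    obtain I where "I \<in> D k" "P \<subseteq> I" using Suc.IH[OF P(1) k] by blast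
    then show ?thesis using P(2) by blast
  qed
qed

lemma ancestor_unique:
  "J \<in> D m \<Longrightarrow> I \<in> D k \<Longrightarrow> I' \<in> D k \<Longrightarrow> J \<subseteq> I \<Longrightarrow> J \<subseteq> I' \<Longrightarrow> I = I'"
proof -
  assume a: "J \<in> D m" "I \<in> D k" "I' \<in> D k" "J \<subseteq> I" "J \<subseteq> I'"
  obtain x where "x \<in> J" using cell_nonempty[OF a(1)] by auto
  then show "I = I'" using cell_unique[OF a(2,3)] a(4,5) by blast
qed

definition ancestor :: "nat \<Rightarrow> real set \<Rightarrow> real set" where
  "ancestor n J = (THE P. P \<in> D n \<and> J \<subseteq> P)"

lemma ancestor_eq: "J \<in> D m \<Longrightarrow> P \<in> D n \<Longrightarrow> J \<subseteq> P \<Longrightarrow> ancestor n J = P"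
  unfolding ancestor_def by (rule the_equality) (auto dest: ancestor_unique)

lemma ancestor_cell:
  assumes "J \<in> D m" "n \<le> m"
  shows "ancestor n J \<in> D n" "J \<subseteq> ancestor n J"
  using ancestor_exists[OF assms] ancestor_eq[OF assms(1)] by auto

lemma ancestor_ancestor:
  assumes "J \<in> D m" "k \<le> n" "n \<le> m"
  shows "ancestor k (ancestor n J) = ancestor k J"
proof -
  have p: "ancestor n J \<in> D n" "J \<subseteq> ancestor n J" using ancestor_cell assms by auto
  have "ancestor k (ancestor n J) \<in> D k" "ancestor n J \<subseteq> ancestor k (ancestor n J)"
    using ancestor_cell[OF p(1) assms(2)] by auto
  then show ?thesis using ancestor_eq[OF assms(1)] p(2) by auto
qed

definition descendants :: "nat \<Rightarrow> real set \<Rightarrow> nat \<Rightarrow> real set set" where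
  "descendants k I n = {J \<in> D (k + n). J \<subseteq> I}"

lemma descendantsD: "J \<in> descendants k I n \<Longrightarrow> J \<in> D (k + n) \<and> J \<subseteq> I"
  unfolding descendants_def by auto

lemma descendants_0_trans:
  "J \<in> descendants 0 Q n \<Longrightarrow> K \<in> descendants n J m \<Longrightarrow> K \<in> descendants 0 Q (n + m)"
  unfolding descendants_def by auto

lemma descendants_0: "I \<in> D k \<Longrightarrow> descendants k I 0 = {I}"
  unfolding descendants_def using ancestor_unique[of _ k I k] by auto

lemma descendants_add:
  assumes I: "I \<in> D k"
  shows "descendants k I (m + n) = (\<Union>J\<in>descendants k I m. descendants (k + m) J n)"
proof
  show "descendants k I (m + n) \<subseteq> (\<Union>J\<in>descendants k I m. descendants (k + m) J n)"
  proof
    fix K assume "K \<in> descendants k I (m + n)"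
    then have K: "K \<in> D (k + m + n)" "K \<subseteq> I" unfolding descendants_def by (auto simp: add.assoc)
    then obtain J where J: "J \<in> D (k + m)" "K \<subseteq> J" using ancestor_exists[OF K(1), of "k + m"]
      by auto
    obtain I' where I': "I' \<in> D k" "J \<subseteq> I'" using ancestor_exists[OF J(1), of k] by auto
    have "I' = I" using ancestor_unique[OF K(1) I'(1) I] J(2) I'(2) K(2) by blast
    then show "K \<in> (\<Union>J\<in>descendants k I m. descendants (k + m) J n)"
      using K J I' unfolding descendants_def by auto
  qed
qed (auto simp: descendants_def add.assoc)

lemma descendants_1:
  assumes I: "I \<in> D k"
  obtains J1 J2 where "descendants k I 1 = {J1, J2}" "J1 \<noteq> J2" "I = J1 \<union> J2" "J1 \<inter> J2 = {}"
    "J1 \<in> D (Suc k)" "J2 \<in> D (Suc k)"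
proof -
  obtain J1 J2 where c: "J1 \<in> D (Suc k)" "J2 \<in> D (Suc k)" "J1 \<noteq> J2" "I = J1 \<union> J2"
    using cell_children[OF I] by blast
  have "descendants k I 1 = {J1, J2}"
  proof
    show "descendants k I 1 \<subseteq> {J1, J2}"
    proof
      fix J assume "J \<in> descendants k I 1"
      then have J: "J \<in> D (Suc k)" "J \<subseteq> I" unfolding descendants_def by auto
      then obtain x where "x \<in> J" using cell_nonempty by blast
      then show "J \<in> {J1, J2}" using cell_unique[OF J(1)] c J by blast
    qed
  qed (use c in \<open>auto simp: descendants_def\<close>)
  then show thesis by (rule that[OF _ c(3,4) cell_disjoint[OF c(1-3)] c(1,2)])
qed

lemma finite_descendants: "I \<in> D k \<Longrightarrow> finite (descendants k I n)"
proof (induction n arbitrary: I k)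
  case (Suc n)
  obtain J1 J2 where "descendants k I 1 = {J1, J2}" "J1 \<in> D (Suc k)" "J2 \<in> D (Suc k)"
    by (rule descendants_1[OF Suc.prems])
  then show ?case using descendants_add[OF Suc.prems, of 1 n] Suc.IH by simp
qed (simp add: descendants_0)

lemma sum_descendants_add:
  assumes I: "I \<in> D k"
  shows "(\<Sum>K\<in>descendants k I (m + n). f K)
    = (\<Sum>J\<in>descendants k I m. \<Sum>K\<in>descendants (k + m) J n. f K)"
  unfolding descendants_add[OF I]
proof (rule sum.UNION_disjoint)
  show "finite (descendants k I m)" using finite_descendants[OF I] .
  show "\<forall>J\<in>descendants k I m. finite (descendants (k + m) J n)"
    using finite_descendants descendantsD by blast
  show "\<forall>J\<in>descendants k I m. \<forall>J'\<in>descendants k I m. J \<noteq> J' \<longrightarrow>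
      descendants (k + m) J n \<inter> descendants (k + m) J' n = {}"
  proof (intro ballI impI)
    fix J J' assume "J \<in> descendants k I m" "J' \<in> descendants k I m" "J \<noteq> J'"
    then have "J \<inter> J' = {}" unfolding descendants_def using cell_disjoint by blast
    then show "descendants (k + m) J n \<inter> descendants (k + m) J' n = {}"
      unfolding descendants_def using cell_nonempty by blast
  qed
qed

lemma descendants_ancestor:
  assumes Q: "Q \<in> D 0" and J: "J \<in> descendants 0 Q (Suc n)"
  shows "ancestor n J \<in> descendants 0 Q n" "J \<in> descendants n (ancestor n J) 1"
proof -
  have JD: "J \<in> D (Suc n)" "J \<subseteq> Q" using descendantsD[OF J] by auto
  have p: "ancestor n J \<in> D n" "J \<subseteq> ancestor n J" using ancestor_cell[OF JD(1)] by auto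
  obtain Q' where Q': "Q' \<in> D 0" "ancestor n J \<subseteq> Q'" using ancestor_exists[OF p(1)] by auto
  have "Q' = Q" using ancestor_unique[OF JD(1) Q'(1) Q] p(2) Q'(2) JD(2) by blast
  then show "ancestor n J \<in> descendants 0 Q n" using p Q' unfolding descendants_def by simp
  show "J \<in> descendants n (ancestor n J) 1" using p JD unfolding descendants_def by simp
qed

lemma ancestor_child: "J \<in> D n \<Longrightarrow> K \<in> descendants n J 1 \<Longrightarrow> ancestor n K = J"
  using descendantsD[of K n J 1] ancestor_eq[of K "n + 1" J n] by auto

lemma descendants_0_of_mem:
  assumes Q: "Q \<in> D 0" and I: "I \<in> D k" and "x \<in> I" "x \<in> Q"
  shows "I \<in> descendants 0 Q k"
proof -
  obtain P where P: "P \<in> D 0" "I \<subseteq> P" using ancestor_exists[OF I] by auto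
  have "P = Q" using cell_unique[OF P(1) Q] P assms by auto
  then show ?thesis using P I unfolding descendants_def by auto
qed

definition dyadic_additive :: "(real set \<Rightarrow> 'a::comm_monoid_add) \<Rightarrow> bool" where
  "dyadic_additive f \<longleftrightarrow> (\<forall>k. \<forall>I\<in>D k. f I = (\<Sum>J\<in>descendants k I 1. f J))"

lemma dyadic_additive_sum:
  "dyadic_additive f \<Longrightarrow> I \<in> D k \<Longrightarrow> (\<Sum>J\<in>descendants k I n. f J) = f I"
proof (induction n arbitrary: I k)
  case (Suc n)
  have "(\<Sum>J\<in>descendants k I (1 + n). f J)
      = (\<Sum>J\<in>descendants k I 1. \<Sum>K\<in>descendants (k + 1) J n. f K)"
    by (rule sum_descendants_add[OF Suc.prems(2)])
  also have "\<dots> = (\<Sum>J\<in>descendants k I 1. f J)"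
    using Suc.IH[OF Suc.prems(1)] descendantsD by (intro sum.cong) fastforce+
  also have "\<dots> = f I" using Suc.prems unfolding dyadic_additive_def by auto
  finally show ?case by simp
qed (simp add: descendants_0)

lemma level_additive_sum:
  assumes add: "\<And>n J. J \<in> descendants 0 Q n \<Longrightarrow> f n J = (\<Sum>K\<in>descendants n J 1. f (Suc n) K)"
    and J: "J \<in> descendants 0 Q n"
  shows "(\<Sum>K\<in>descendants n J m. f (n+m) K) = f n J"
proof (induction m)
  case 0
  have "J \<in> D n" using descendantsD[OF J] by simp
  then show ?case by (simp add: descendants_0)
next
  case (Suc m)
  have JD: "J \<in> D n" using descendantsD[OF J] by simp
  have "(\<Sum>K\<in>descendants n J (m + 1). f (n + Suc m) K)
      = (\<Sum>K'\<in>descendants n J m. \<Sum>K\<in>descendants (n+m) K' 1. f (n + Suc m) K)"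
    by (rule sum_descendants_add[OF JD])
  also have "\<dots> = (\<Sum>K'\<in>descendants n J m. f (n+m) K')"
  proof (rule sum.cong[OF refl])
    fix K' assume "K' \<in> descendants n J m"
    then have "K' \<in> descendants 0 Q (n+m)" by (rule descendants_0_trans[OF J])
    then show "(\<Sum>K\<in>descendants (n+m) K' 1. f (n + Suc m) K) = f (n+m) K'" using add by simp
  qed
  finally show ?case using Suc.IH by simp
qed

lemma countable_descendants: "Q \<in> D 0 \<Longrightarrow> countable (\<Union>k. descendants 0 Q k)"
  using finite_descendants by (intro countable_UN) (auto intro: countable_finite)

lemma cells_nested_or_disjoint:
  assumes I: "I \<in> D k" and J: "J \<in> D j" and "k \<le> j" and x: "x \<in> I" "x \<in> J"
  shows "J \<subseteq> I"
proof -
  have "ancestor k J \<in> D k" "J \<subseteq> ancestor k J" using ancestor_cell[OF J \<open>k \<le> j\<close>] by auto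
  moreover have "ancestor k J = I" using cell_unique[OF calculation(1) I] calculation(2) x by blast
  ultimately show ?thesis by simp
qed

lemma cell_borel: "I \<in> D k \<Longrightarrow> I \<in> sets borel"
  using cell_eq_interval[of I k] by auto

lemma cell_subset_Icc: "I \<in> D k \<Longrightarrow> I \<subseteq> {Inf I .. Inf I + 1}"
proof -
  assume I: "I \<in> D k"
  have "(1/2::real)^k \<le> 1" by (simp add: power_le_one)
  then show ?thesis using cell_eq_Inf[OF I]
    by (metis atLeastLessThan_subseteq_atLeastAtMost_iff order.refl
        add_le_cancel_left atLeastLessThan_empty_iff2 empty_subsetI order_trans)
qed

lemma emeasure_cell_finite:
  assumes "radon_measure M" "I \<in> D k"
  shows "emeasure M I < \<infinity>"
proof -
  have "emeasure M I \<le> emeasure M {Inf I .. Inf I + 1}"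
    using assms cell_subset_Icc[OF assms(2)] cell_borel[OF assms(2)]
    by (intro emeasure_mono) (auto simp: radon_measure_def)
  also have "\<dots> < \<infinity>" using assms(1) unfolding radon_measure_def by auto
  finally show ?thesis .
qed

lemma measure_dyadic_additive:
  assumes "radon_measure M"
  shows "dyadic_additive (measure M)"
  unfolding dyadic_additive_def
proof (intro allI ballI)
  fix k I assume I: "I \<in> D k"
  obtain J1 J2 where c: "descendants k I 1 = {J1, J2}" "J1 \<noteq> J2" "I = J1 \<union> J2" "J1 \<inter> J2 = {}"
      "J1 \<in> D (Suc k)" "J2 \<in> D (Suc k)" by (rule descendants_1[OF I])
  have "measure M (J1 \<union> J2) = measure M J1 + measure M J2"
    using emeasure_cell_finite[OF assms c(5)] emeasure_cell_finite[OF assms c(6)]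
      cell_borel[OF c(5)] cell_borel[OF c(6)] c(4)
      sets_radon_measure[OF assms] by (intro measure_Union) auto
  then show "measure M I = (\<Sum>J\<in>descendants k I 1. measure M J)" using c(1,2,3) by simp
qed

lemma measure_cell_mono:
  assumes "radon_measure N" "J \<in> D m" "P \<in> D n" "J \<subseteq> P"
  shows "measure N J \<le> measure N P"
proof (rule measure_mono_fmeasurable[OF assms(4)])
  have s: "sets N = sets borel" by (rule sets_radon_measure[OF assms(1)])
  show "J \<in> sets N" using cell_borel[OF assms(2)] s by simp
  show "P \<in> fmeasurable N" using cell_borel[OF assms(3)] s emeasure_cell_finite[OF assms(1,3)]
    by (simp add: fmeasurable_def)
qed

end

section \<open>Discretising the coefficients \<open>\<alpha>\<close>\<close>

context dyadic begin

lemma integral_normalized_measure: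
  assumes M: "radon_measure M" and I: "I \<in> D k" and pos: "0 < measure M I"
    and psi: "\<psi> \<in> borel_measurable borel"
  shows "integral\<^sup>L (normalized_measure M I) \<psi>
    = inverse (measure M I) * (\<integral>x. indicator I x * \<psi> (T_map I x) \<partial>M)"
proof -
  let ?M = "density M (indicator I)"
  have sM: "sets M = sets borel" by (rule sets_radon_measure[OF M])
  have bM: "borel_measurable M = borel_measurable (borel::real measure)"
    by (rule measurable_cong_sets[OF sM refl])
  have T: "T_map I \<in> measurable ?M borel"
    using T_map_measurable measurable_cong_sets[of ?M borel borel borel] sM by simp
  have psi': "\<psi> \<in> borel_measurable (distr ?M borel (T_map I))"
    using psi measurable_cong_sets[of "distr ?M borel (T_map I)" borel borel borel] by simp
  have "normalized_measure M I
      = scale_measure (ennreal (inverse (measure M I))) (distr ?M borel (T_map I))"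
    using emeasure_cell_finite[OF M I] pos unfolding normalized_measure_def
    by (simp add: emeasure_eq_ennreal_measure inverse_ennreal)
  then have "integral\<^sup>L (normalized_measure M I) \<psi>
      = inverse (measure M I) * integral\<^sup>L (distr ?M borel (T_map I)) \<psi>"
    using pos by (simp add: integral_scale_measure[OF _ psi'])
  also have "integral\<^sup>L (distr ?M borel (T_map I)) \<psi> = (\<integral>x. \<psi> (T_map I x) \<partial>?M)"
    by (rule integral_distr[OF T psi])
  also have "\<dots> = (\<integral>x. indicator I x * \<psi> (T_map I x) \<partial>M)"
  proof -
    have "?M = density M (\<lambda>x. ennreal (indicator I x))" by (simp add: ennreal_indicator)
    moreover have "(\<integral>x. \<psi> (T_map I x) \<partial>density M (\<lambda>x. ennreal (indicator I x)))
        = (\<integral>x. indicator I x *\<^sub>R \<psi> (T_map I x) \<partial>M)"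
      using measurable_comp[OF T_map_measurable psi] cell_borel[OF I]
      by (intro integral_density) (auto simp: bM comp_def)
    ultimately show ?thesis by simp
  qed
  finally show ?thesis .
qed

lemma T_map_descendant:
  assumes I: "I \<in> D k" and J: "J \<in> descendants k I n" and x: "x \<in> J"
  shows "0 \<le> T_map I x - T_map I (Inf J)" "T_map I x - T_map I (Inf J) \<le> (1/2)^n"
proof -
  have JD: "J \<in> D (k+n)" using descendantsD[OF J] by simp
  have xJ: "Inf J \<le> x" "x < Inf J + (1/2)^(k+n)" using x cell_eq_Inf[OF JD]
    by (metis atLeastLessThan_iff)+
  have d: "Sup I - Inf I = (1/2)^k" using Sup_cell[OF I] by simp
  have "T_map I x - T_map I (Inf J)
      = (x - Inf I) / (Sup I - Inf I) - (Inf J - Inf I) / (Sup I - Inf I)"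
    unfolding T_map_def by simp
  also have "\<dots> = (x - Inf J) / (Sup I - Inf I)" by (simp add: diff_divide_distrib)
  also have "\<dots> = (x - Inf J) * 2^k" unfolding d by (simp add: power_one_over)
  finally have e: "T_map I x - T_map I (Inf J) = (x - Inf J) * 2^k" .
  show "0 \<le> T_map I x - T_map I (Inf J)" unfolding e using xJ by simp
  have "(x - Inf J) * 2^k \<le> (1/2)^(k+n) * 2^k" using xJ by (intro mult_right_mono) auto
  also have "\<dots> = (1/2)^n" by (simp add: power_add field_simps power_one_over)
  finally show "T_map I x - T_map I (Inf J) \<le> (1/2)^n" unfolding e .
qed

lemma integrable_indicator_cell:
  fixes g :: "real \<Rightarrow> real"
  assumes M: "radon_measure M" and J: "J \<in> D m" and g: "g \<in> borel_measurable borel"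
    and b: "\<And>x. \<bar>g x\<bar> \<le> B"
  shows "integrable M (\<lambda>x. indicator J x * g x)"
proof -
  have sM: "sets M = sets borel" by (rule sets_radon_measure[OF M])
  have bM: "borel_measurable M = borel_measurable (borel::real measure)"
    by (rule measurable_cong_sets[OF sM refl])
  have JM: "J \<in> sets M" using cell_borel[OF J] sM by simp
  have i: "integrable M (\<lambda>x. B * indicator J x :: real)"
    using emeasure_cell_finite[OF M J] JM by simp
  have m: "(\<lambda>x. indicator J x * g x) \<in> borel_measurable M"
    unfolding bM using cell_borel[OF J] g by simp
  have ae: "AE x in M. norm (indicator J x * g x) \<le> norm (B * indicator J x)"
  proof (rule AE_I2)
    fix x
    have "0 \<le> B" using b[of x] by linarith
    then show "norm (indicator J x * g x) \<le> norm (B * indicator J x)"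
      using b[of x] by (auto simp: indicator_def)
  qed
  show ?thesis by (rule Bochner_Integration.integrable_bound[OF i m ae])
qed

lemma dyadic_additive_integral:
  fixes g :: "real \<Rightarrow> real"
  assumes M: "radon_measure M" and g: "g \<in> borel_measurable borel" and b: "\<And>x. \<bar>g x\<bar> \<le> B"
  shows "dyadic_additive (\<lambda>J. \<integral>x. indicator J x * g x \<partial>M)"
  unfolding dyadic_additive_def
proof (intro allI ballI)
  fix k I assume I: "I \<in> D k"
  obtain J1 J2 where c: "descendants k I 1 = {J1, J2}" "J1 \<noteq> J2" "I = J1 \<union> J2" "J1 \<inter> J2 = {}"
      "J1 \<in> D (Suc k)" "J2 \<in> D (Suc k)" by (rule descendants_1[OF I])
  have ind: "\<And>x. indicator I x * g x = indicator J1 x * g x + indicator J2 x * g x"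
  proof -
    fix x
    have "indicator I x = (indicator J1 x + indicator J2 x :: real)"
      using c(3,4) by (auto simp: indicator_def)
    then show "indicator I x * g x = indicator J1 x * g x + indicator J2 x * g x"
      by (simp add: distrib_right)
  qed
  have "(\<integral>x. indicator I x * g x \<partial>M)
      = (\<integral>x. indicator J1 x * g x \<partial>M) + (\<integral>x. indicator J2 x * g x \<partial>M)"
    using integrable_indicator_cell[OF M c(5) g b] integrable_indicator_cell[OF M c(6) g b]
    unfolding ind by simp
  then show "(\<integral>x. indicator I x * g x \<partial>M) = (\<Sum>J\<in>descendants k I 1. \<integral>x. indicator J x * g x \<partial>M)"
    using c(1,2) by simp
qed

lemma integral_cell_approx:
  assumes M: "radon_measure M" and I: "I \<in> D k" and J: "J \<in> descendants k I n" and psi: "W1_test \<psi>"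
  shows "\<bar>(\<integral>x. indicator J x * \<psi> (T_map I x) \<partial>M) - \<psi> (T_map I (Inf J)) * measure M J\<bar>
      \<le> (1/2)^n * measure M J"
proof -
  have JD: "J \<in> D (k+n)" using descendantsD[OF J] by simp
  have sM: "sets M = sets borel" by (rule sets_radon_measure[OF M])
  have JM: "J \<in> sets M" using cell_borel[OF JD] sM by simp
  have fin: "emeasure M J < \<infinity>" by (rule emeasure_cell_finite[OF M JD])
  have pm: "(\<lambda>x. \<psi> (T_map I x)) \<in> borel_measurable borel"
    using measurable_comp[OF T_map_measurable W1_test_measurable[OF psi]] by (simp add: comp_def)
  have i1: "integrable M (\<lambda>x. indicator J x * \<psi> (T_map I x))"
    by (rule integrable_indicator_cell[OF M JD pm W1_test_bounded[OF psi]])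
  have i2: "integrable M (\<lambda>x. indicator J x * \<psi> (T_map I (Inf J)))"
    using JM fin by simp
  have sp: "space M = UNIV" using sets_eq_imp_space_eq[OF sM] by simp
  have e2: "(\<integral>x. indicator J x * \<psi> (T_map I (Inf J)) \<partial>M) = \<psi> (T_map I (Inf J)) * measure M J"
    using JM sp by (simp add: mult.commute)
  have "(\<integral>x. indicator J x * \<psi> (T_map I x) \<partial>M) - \<psi> (T_map I (Inf J)) * measure M J
      = (\<integral>x. indicator J x * \<psi> (T_map I x) - indicator J x * \<psi> (T_map I (Inf J)) \<partial>M)"
    using i1 i2 e2 sp by simp
  also have "\<bar>\<dots>\<bar> \<le> (\<integral>x. (1/2)^n * indicator J x \<partial>M)"
  proof (rule integral_abs_bound_integral)
    show "integrable M (\<lambda>x. indicator J x * \<psi> (T_map I x) - indicator J x * \<psi> (T_map I (Inf J)))"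
      using i1 i2 by simp
    show "integrable M (\<lambda>x. (1/2)^n * indicator J x :: real)" using JM fin by simp
    fix x
    show "\<bar>indicator J x * \<psi> (T_map I x) - indicator J x * \<psi> (T_map I (Inf J))\<bar>
        \<le> (1/2)^n * indicator J x"
    proof (cases "x \<in> J")
      case True
      have "\<bar>\<psi> (T_map I x) - \<psi> (T_map I (Inf J))\<bar> \<le> \<bar>T_map I x - T_map I (Inf J)\<bar>"
        by (rule W1_testD[OF psi])
      also have "\<dots> \<le> (1/2)^n" using T_map_descendant[OF I J True] by simp
      finally show ?thesis using True by simp
    qed simp
  qed
  also have "\<dots> = (1/2)^n * measure M J" using JM sp by simp
  finally show ?thesis .
qed

lemma integral_approx_riemann:
  assumes M: "radon_measure M" and I: "I \<in> D k" and psi: "W1_test \<psi>"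
  shows "\<bar>(\<integral>x. indicator I x * \<psi> (T_map I x) \<partial>M)
      - (\<Sum>J\<in>descendants k I n. \<psi> (T_map I (Inf J)) * measure M J)\<bar>
     \<le> (1/2)^n * measure M I"
proof -
  have pm: "(\<lambda>x. \<psi> (T_map I x)) \<in> borel_measurable borel"
    using measurable_comp[OF T_map_measurable W1_test_measurable[OF psi]] by (simp add: comp_def)
  have "(\<integral>x. indicator I x * \<psi> (T_map I x) \<partial>M)
      = (\<Sum>J\<in>descendants k I n. \<integral>x. indicator J x * \<psi> (T_map I x) \<partial>M)"
    using dyadic_additive_sum[OF dyadic_additive_integral[OF M pm W1_test_bounded[OF psi]] I]
    by simp
  then have "\<bar>(\<integral>x. indicator I x * \<psi> (T_map I x) \<partial>M)
      - (\<Sum>J\<in>descendants k I n. \<psi> (T_map I (Inf J)) * measure M J)\<bar>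
      = \<bar>\<Sum>J\<in>descendants k I n. (\<integral>x. indicator J x * \<psi> (T_map I x) \<partial>M)
        - \<psi> (T_map I (Inf J)) * measure M J\<bar>"
    by (simp add: sum_subtractf)
  also have "\<dots> \<le> (\<Sum>J\<in>descendants k I n. \<bar>(\<integral>x. indicator J x * \<psi> (T_map I x) \<partial>M)
      - \<psi> (T_map I (Inf J)) * measure M J\<bar>)"
    by (rule sum_abs)
  also have "\<dots> \<le> (\<Sum>J\<in>descendants k I n. (1/2)^n * measure M J)"
    by (rule sum_mono) (rule integral_cell_approx[OF M I _ psi])
  also have "\<dots> = (1/2)^n * measure M I"
    using dyadic_additive_sum[OF measure_dyadic_additive[OF M] I, of n]
    by (simp add: sum_distrib_left[symmetric])
  finally show ?thesis .
qed

definition riemann_sum :: "real measure \<Rightarrow> real set \<Rightarrow> nat \<Rightarrow> (real \<Rightarrow> real) \<Rightarrow> nat \<Rightarrow> real" where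
  "riemann_sum M I k \<psi> n = (\<Sum>J\<in>descendants k I n. \<psi> (T_map I (Inf J)) * measure M J / measure M I)"

lemma normalized_integral_approx:
  assumes M: "radon_measure M" and I: "I \<in> D k" and pos: "0 < measure M I" and psi: "W1_test \<psi>"
  shows "\<bar>integral\<^sup>L (normalized_measure M I) \<psi> - riemann_sum M I k \<psi> n\<bar> \<le> (1/2)^n"
proof -
  have e1: "integral\<^sup>L (normalized_measure M I) \<psi>
      = inverse (measure M I) * (\<integral>x. indicator I x * \<psi> (T_map I x) \<partial>M)"
    by (rule integral_normalized_measure[OF M I pos W1_test_measurable[OF psi]])
  have e2: "riemann_sum M I k \<psi> n
      = inverse (measure M I) * (\<Sum>J\<in>descendants k I n. \<psi> (T_map I (Inf J)) * measure M J)"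
    unfolding riemann_sum_def by (simp add: sum_distrib_left divide_inverse mult.commute)
  have "\<bar>integral\<^sup>L (normalized_measure M I) \<psi> - riemann_sum M I k \<psi> n\<bar>
      = inverse (measure M I) * \<bar>(\<integral>x. indicator I x * \<psi> (T_map I x) \<partial>M)
        - (\<Sum>J\<in>descendants k I n. \<psi> (T_map I (Inf J)) * measure M J)\<bar>"
    unfolding e1 e2 using pos by (simp add: right_diff_distrib[symmetric] abs_mult)
  also have "\<dots> \<le> inverse (measure M I) * ((1/2)^n * measure M I)"
    using integral_approx_riemann[OF M I psi, of n] pos by (intro mult_left_mono) auto
  also have "\<dots> = (1/2)^n" using pos by simp
  finally show ?thesis .
qed

definition rel_mass_diff :: "real measure \<Rightarrow> real measure \<Rightarrow> real set \<Rightarrow> real set \<Rightarrow> real" where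
  "rel_mass_diff M N I J = measure M J / measure M I - measure N J / measure N I"

lemma rel_mass_diff_additive:
  assumes M: "radon_measure M" and N: "radon_measure N"
  shows "dyadic_additive (rel_mass_diff M N I)"
  unfolding dyadic_additive_def
proof (intro allI ballI)
  fix k J assume J: "J \<in> D k"
  have a: "measure M J = (\<Sum>K\<in>descendants k J 1. measure M K)"
    "measure N J = (\<Sum>K\<in>descendants k J 1. measure N K)"
    using dyadic_additive_sum[OF measure_dyadic_additive[OF M] J, of 1]
      dyadic_additive_sum[OF measure_dyadic_additive[OF N] J, of 1] by simp_all
  show "rel_mass_diff M N I J = (\<Sum>K\<in>descendants k J 1. rel_mass_diff M N I K)"
    unfolding rel_mass_diff_def a by (simp add: sum_subtractf sum_divide_distrib)
qed

lemma riemann_sum_diff: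
  "riemann_sum M I k \<psi> n - riemann_sum N I k \<psi> n
      = (\<Sum>J\<in>descendants k I n. \<psi> (T_map I (Inf J)) * rel_mass_diff M N I J)"
  unfolding riemann_sum_def rel_mass_diff_def by (simp add: sum_subtractf right_diff_distrib)

definition variation :: "real measure \<Rightarrow> real measure \<Rightarrow> real set \<Rightarrow> nat \<Rightarrow> nat \<Rightarrow> real" where
  "variation M N I k n = (\<Sum>J\<in>descendants k I n. \<bar>rel_mass_diff M N I J\<bar>)"

lemma W1_test_sample_child_diff:
  assumes I: "I \<in> D k" and J: "J \<in> descendants k I n" and K: "K \<in> descendants (k + n) J 1"
    and psi: "W1_test \<psi>"
  shows "\<bar>\<psi> (T_map I (Inf K)) - \<psi> (T_map I (Inf J))\<bar> \<le> (1/2)^n"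
proof -
  have "K \<in> D (k + n + 1)" "K \<subseteq> J" using descendantsD[OF K] by auto
  then have "Inf K \<in> J" using Inf_in_cell by blast
  then have "\<bar>T_map I (Inf K) - T_map I (Inf J)\<bar> \<le> (1/2)^n"
    using T_map_descendant[OF I J] by auto
  then show ?thesis using W1_testD[OF psi] order_trans by blast
qed

lemma riemann_sum_diff_step:
  assumes M: "radon_measure M" and N: "radon_measure N" and I: "I \<in> D k" and psi: "W1_test \<psi>"
  shows "\<bar>(riemann_sum M I k \<psi> (Suc n) - riemann_sum N I k \<psi> (Suc n))
      - (riemann_sum M I k \<psi> n - riemann_sum N I k \<psi> n)\<bar>
     \<le> (1/2)^n * variation M N I k (Suc n)"
proof -
  let ?c = "\<lambda>J. \<psi> (T_map I (Inf J))"
  let ?a = "rel_mass_diff M N I"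
  have add: "dyadic_additive ?a" by (rule rel_mass_diff_additive[OF M N])
  have s1: "(\<Sum>J\<in>descendants k I (Suc n). ?c J * ?a J)
      = (\<Sum>J\<in>descendants k I n. \<Sum>K\<in>descendants (k+n) J 1. ?c K * ?a K)"
    using sum_descendants_add[OF I, of "\<lambda>J. ?c J * ?a J" n 1] by simp
  have s2: "(\<Sum>J\<in>descendants k I n. ?c J * ?a J)
      = (\<Sum>J\<in>descendants k I n. \<Sum>K\<in>descendants (k+n) J 1. ?c J * ?a K)"
  proof (rule sum.cong[OF refl])
    fix J assume "J \<in> descendants k I n"
    then have "J \<in> D (k+n)" using descendantsD by blast
    then have "?a J = (\<Sum>K\<in>descendants (k+n) J 1. ?a K)"
      using add unfolding dyadic_additive_def by blast
    then show "?c J * ?a J = (\<Sum>K\<in>descendants (k+n) J 1. ?c J * ?a K)"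
      by (simp add: sum_distrib_left)
  qed
  have "\<bar>(riemann_sum M I k \<psi> (Suc n) - riemann_sum N I k \<psi> (Suc n))
      - (riemann_sum M I k \<psi> n - riemann_sum N I k \<psi> n)\<bar>
      = \<bar>\<Sum>J\<in>descendants k I n. \<Sum>K\<in>descendants (k+n) J 1. (?c K - ?c J) * ?a K\<bar>"
    unfolding riemann_sum_diff s1 s2 by (simp add: sum_subtractf left_diff_distrib)
  also have "\<dots> \<le> (\<Sum>J\<in>descendants k I n. \<bar>\<Sum>K\<in>descendants (k+n) J 1. (?c K - ?c J) * ?a K\<bar>)"
    by (rule sum_abs)
  also have "\<dots> \<le> (\<Sum>J\<in>descendants k I n. \<Sum>K\<in>descendants (k+n) J 1. (1/2)^n * \<bar>?a K\<bar>)"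
  proof (intro sum_mono order_trans[OF sum_abs])
    fix J K assume "J \<in> descendants k I n" "K \<in> descendants (k + n) J 1"
    then show "\<bar>(?c K - ?c J) * ?a K\<bar> \<le> (1/2)^n * \<bar>?a K\<bar>"
      using W1_test_sample_child_diff[OF I _ _ psi] by (simp add: abs_mult mult_right_mono)
  qed
  also have "\<dots> = (1/2)^n * variation M N I k (Suc n)"
    unfolding variation_def using sum_descendants_add[OF I, of "\<lambda>K. \<bar>?a K\<bar>" n 1]
    by (simp add: sum_distrib_left)
  finally show ?thesis .
qed

lemma riemann_sum_diff_bound:
  assumes M: "radon_measure M" and N: "radon_measure N" and I: "I \<in> D k" and psi: "W1_test \<psi>"
    and pM: "0 < measure M I" and pN: "0 < measure N I"
  shows "\<bar>riemann_sum M I k \<psi> n - riemann_sum N I k \<psi> n\<bar>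
      \<le> (\<Sum>i<n. (1/2)^i * variation M N I k (Suc i))"
proof (induction n)
  case 0
  have "riemann_sum M I k \<psi> 0 - riemann_sum N I k \<psi> 0 = 0"
    unfolding riemann_sum_diff rel_mass_diff_def descendants_0[OF I] using pM pN by simp
  then show ?case by simp
next
  case (Suc n)
  have "\<bar>riemann_sum M I k \<psi> (Suc n) - riemann_sum N I k \<psi> (Suc n)\<bar>
      \<le> \<bar>(riemann_sum M I k \<psi> (Suc n) - riemann_sum N I k \<psi> (Suc n))
          - (riemann_sum M I k \<psi> n - riemann_sum N I k \<psi> n)\<bar>
        + \<bar>riemann_sum M I k \<psi> n - riemann_sum N I k \<psi> n\<bar>"
    by linarith
  also have "\<dots> \<le> (1/2)^n * variation M N I k (Suc n) + (\<Sum>i<n. (1/2)^i * variation M N I k (Suc i))"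
    using riemann_sum_diff_step[OF M N I psi, of n] Suc.IH by linarith
  finally show ?case by simp
qed

lemma W1_test_integral_diff_bound:
  assumes M: "radon_measure M" and N: "radon_measure N" and I: "I \<in> D k" and psi: "W1_test \<psi>"
    and pM: "0 < measure M I" and pN: "0 < measure N I"
  shows "\<bar>integral\<^sup>L (normalized_measure M I) \<psi> - integral\<^sup>L (normalized_measure N I) \<psi>\<bar>
     \<le> (\<Sum>i<n. (1/2)^i * variation M N I k (Suc i)) + 2 * (1/2)^n"
  using normalized_integral_approx[OF M I pM psi, of n]
    normalized_integral_approx[OF N I pN psi, of n]
    riemann_sum_diff_bound[OF M N I psi pM pN, of n] by linarith

lemma alpha_le_variation:
  assumes "radon_measure M" "radon_measure N" "I \<in> D k" "0 < measure M I" "0 < measure N I"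
  shows "alpha M N I \<le> (\<Sum>i<n. (1/2)^i * variation M N I k (Suc i)) + 2 * (1/2)^n"
  unfolding alpha_def
  by (rule wasserstein1_bounds(2)) (rule W1_test_integral_diff_bound[OF assms(1-3) _ assms(4,5)])

lemma alpha_nonneg:
  assumes "radon_measure M" "radon_measure N" "I \<in> D k" "0 < measure M I" "0 < measure N I"
  shows "0 \<le> alpha M N I"
  unfolding alpha_def
  by (rule wasserstein1_bounds(1)) (rule W1_test_integral_diff_bound[OF assms(1-3) _ assms(4,5)])

end

section \<open>The stopping-time tree\<close>

text \<open>The
  stopped ratio of a cell J of level n is the ratio of the first cell on the chain from Q down to J
  that is not in the tree, or of J itself if there is none: the martingale of density ratios,
  stopped when it leaves the tree.\<close>

locale stopping_tree = dyadic +
  fixes mu nu :: "real measure" and Q :: "real set" and C lo hi :: real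
  assumes mu_radon: "radon_measure mu" and nu_radon: "radon_measure nu"
    and doubling: "\<And>k J P. J \<in> D (Suc k) \<Longrightarrow> P \<in> D k \<Longrightarrow> J \<subseteq> P \<Longrightarrow> measure nu P \<le> C * measure nu J"
    and C_ge_1: "1 \<le> C" and Q: "Q \<in> D 0" and lo_pos: "0 < lo" and lo_le_hi: "lo \<le> hi"
    and root_ratio: "0 < measure nu Q" "lo \<le> measure mu Q / measure nu Q"
      "measure mu Q / measure nu Q \<le> hi"
begin

definition ratio :: "real set \<Rightarrow> real" where "ratio J = measure mu J / measure nu J"

definition good :: "real set \<Rightarrow> bool" where
  "good J \<longleftrightarrow> 0 < measure nu J \<and> lo \<le> ratio J \<and> ratio J \<le> hi"

primrec in_tree :: "nat \<Rightarrow> real set \<Rightarrow> bool" where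
  "in_tree 0 J \<longleftrightarrow> J = Q \<and> good Q"
| "in_tree (Suc n) J \<longleftrightarrow> J \<in> descendants 0 Q (Suc n) \<and> good J \<and> in_tree n (ancestor n J)"

primrec stopped_ratio :: "nat \<Rightarrow> real set \<Rightarrow> real" where
  "stopped_ratio 0 J = ratio J"
| "stopped_ratio (Suc n) J =
    (if in_tree n (ancestor n J) then ratio J else stopped_ratio n (ancestor n J))"

definition ratio_bound :: real where "ratio_bound = C * hi"

lemma in_tree_descendants: "in_tree n J \<Longrightarrow> J \<in> descendants 0 Q n"
  by (cases n) (auto simp: descendants_0[OF Q])

lemma in_tree_good: "in_tree n J \<Longrightarrow> good J"
  by (cases n) auto

lemma stopped_ratio_in_tree: "in_tree n J \<Longrightarrow> stopped_ratio n J = ratio J"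
  by (cases n) auto

lemma ratio_nonneg: "0 \<le> ratio J"
  unfolding ratio_def by simp

lemma good_root: "good Q"
  unfolding good_def ratio_def using root_ratio by simp

lemma good_measure_eq: "good J \<Longrightarrow> measure mu J = ratio J * measure nu J"
  unfolding good_def ratio_def by simp

lemma lo_le_stopped_ratio: "in_tree n J \<Longrightarrow> lo \<le> stopped_ratio n J"
  using stopped_ratio_in_tree in_tree_good unfolding good_def by auto

lemma hi_le_ratio_bound: "hi \<le> ratio_bound"
  unfolding ratio_bound_def using C_ge_1 lo_pos lo_le_hi by (simp add: mult_le_cancel_right1)

text \<open>Doubling enters only here: the children of a good cell have positive \<open>\<nu>\<close>-mass and
  ratio at most C hi.\<close>

lemma child_measure_pos:
  assumes "good J" "J \<in> D n" "K \<in> descendants n J 1"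
  shows "0 < measure nu K"
proof -
  have K: "K \<in> D (Suc n)" "K \<subseteq> J" using descendantsD[OF assms(3)] by auto
  have "0 < measure nu J" using assms(1) unfolding good_def by simp
  also have "\<dots> \<le> C * measure nu K" by (rule doubling[OF K(1) assms(2) K(2)])
  finally show ?thesis using C_ge_1 by (simp add: zero_less_mult_iff)
qed

lemma ratio_child_le:
  assumes P: "good P" "P \<in> D n" and J: "J \<in> D (Suc n)" "J \<subseteq> P"
  shows "ratio J \<le> ratio_bound"
proof (cases "measure nu J = 0")
  case True
  then show ?thesis using hi_le_ratio_bound lo_pos lo_le_hi by (simp add: ratio_def)
next
  case False
  then have nJ: "0 < measure nu J" using measure_nonneg[of nu J] by linarith
  have nP: "0 < measure nu P" using P(1) unfolding good_def by simp
  have "ratio J \<le> measure mu P / measure nu J"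
    using measure_cell_mono[OF mu_radon J(1) P(2) J(2)] nJ
    by (simp add: ratio_def divide_right_mono)
  also have "\<dots> \<le> C * ratio P"
  proof -
    have "measure mu P * measure nu P \<le> measure mu P * (C * measure nu J)"
      using doubling[OF J(1) P(2) J(2)] by (simp add: mult_left_mono)
    then show ?thesis using nJ nP by (simp add: ratio_def field_simps)
  qed
  also have "\<dots> \<le> C * hi" using P(1) C_ge_1 unfolding good_def by (intro mult_left_mono) auto
  finally show ?thesis by (simp add: ratio_bound_def)
qed

lemma stopped_ratio_bounds:
  "J \<in> descendants 0 Q n \<Longrightarrow> 0 \<le> stopped_ratio n J \<and> stopped_ratio n J \<le> ratio_bound"
proof (induction n arbitrary: J)
  case 0
  then have "J = Q" using descendants_0[OF Q] by simp
  then show ?case using good_root ratio_nonneg hi_le_ratio_bound unfolding good_def by fastforce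
next
  case (Suc n)
  let ?P = "ancestor n J"
  have P: "?P \<in> descendants 0 Q n" "J \<in> descendants n ?P 1"
    using descendants_ancestor[OF Q Suc.prems] by auto
  show ?case
  proof (cases "in_tree n ?P")
    case True
    have "?P \<in> D n" "J \<in> D (Suc n)" "J \<subseteq> ?P"
      using descendantsD[OF P(1)] descendantsD[OF P(2)] by auto
    then have "ratio J \<le> ratio_bound" by (rule ratio_child_le[OF in_tree_good[OF True]])
    then show ?thesis using True ratio_nonneg by simp
  qed (use Suc.IH[OF P(1)] in simp)
qed

lemma stopped_ratio_additive:
  assumes J: "J \<in> descendants 0 Q n"
  shows "stopped_ratio n J * measure nu J
    = (\<Sum>K\<in>descendants n J 1. stopped_ratio (Suc n) K * measure nu K)"
proof -
  have JD: "J \<in> D n" using descendantsD[OF J] by simp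
  have pc: "\<And>K. K \<in> descendants n J 1 \<Longrightarrow> ancestor n K = J" by (rule ancestor_child[OF JD])
  show ?thesis
  proof (cases "in_tree n J")
    case True
    have g: "good J" by (rule in_tree_good[OF True])
    have "(\<Sum>K\<in>descendants n J 1. stopped_ratio (Suc n) K * measure nu K)
        = (\<Sum>K\<in>descendants n J 1. measure mu K)"
    proof (rule sum.cong[OF refl])
      fix K assume K: "K \<in> descendants n J 1"
      have "0 < measure nu K" by (rule child_measure_pos[OF g JD K])
      then show "stopped_ratio (Suc n) K * measure nu K = measure mu K"
        using pc[OF K] True by (simp add: ratio_def)
    qed
    also have "\<dots> = measure mu J"
      using dyadic_additive_sum[OF measure_dyadic_additive[OF mu_radon] JD, of 1] by simp
    also have "\<dots> = stopped_ratio n J * measure nu J"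
      using good_measure_eq[OF g] stopped_ratio_in_tree[OF True] by simp
    finally show ?thesis by simp
  next
    case False
    have "(\<Sum>K\<in>descendants n J 1. stopped_ratio (Suc n) K * measure nu K)
        = (\<Sum>K\<in>descendants n J 1. stopped_ratio n J * measure nu K)"
      using pc False by (intro sum.cong) auto
    also have "\<dots> = stopped_ratio n J * measure nu J"
      using dyadic_additive_sum[OF measure_dyadic_additive[OF nu_radon] JD, of 1]
      by (simp add: sum_distrib_left[symmetric])
    finally show ?thesis by simp
  qed
qed

lemma stopped_ratio_sum:
  "J \<in> descendants 0 Q n
    \<Longrightarrow> (\<Sum>K\<in>descendants n J m. stopped_ratio (n + m) K * measure nu K)
      = stopped_ratio n J * measure nu J"
  by (rule level_additive_sum[where f = "\<lambda>n K. stopped_ratio n K * measure nu K"])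
    (auto simp: stopped_ratio_additive)

lemma in_tree_ancestor: "in_tree (k+i) P \<Longrightarrow> in_tree k (ancestor k P)"
proof (induction i arbitrary: P)
  case 0
  have "P \<in> D k" using descendantsD[OF in_tree_descendants[OF 0[simplified]]] by simp
  then have "ancestor k P = P" using ancestor_eq[of P k P k] by simp
  then show ?case using 0 by simp
next
  case (Suc i)
  have h: "P \<in> descendants 0 Q (Suc (k+i))" "in_tree (k+i) (ancestor (k+i) P)"
    using Suc.prems by auto
  have PD: "P \<in> D (Suc (k+i))" using descendantsD[OF h(1)] by simp
  have "in_tree k (ancestor k (ancestor (k+i) P))" by (rule Suc.IH[OF h(2)])
  moreover have "ancestor k (ancestor (k+i) P) = ancestor k P"
    by (rule ancestor_ancestor[OF PD]) auto
  ultimately show ?case by simp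
qed

definition energy :: "real set \<Rightarrow> nat \<Rightarrow> nat \<Rightarrow> real" where
  "energy J n m =
    (\<Sum>K\<in>descendants n J m. measure nu K * (stopped_ratio (n + m) K - stopped_ratio n J)^2)"

definition total_energy :: "nat \<Rightarrow> real" where "total_energy m = energy Q 0 m"

lemma energy_nonneg: "0 \<le> energy J n m"
  unfolding energy_def by (intro sum_nonneg) simp

lemma energy_pythagoras:
  assumes J: "J \<in> descendants 0 Q n"
  shows "(\<Sum>K\<in>descendants n J m. measure nu K * (stopped_ratio (n+m) K - c)^2)
      = energy J n m + measure nu J * (stopped_ratio n J - c)^2"
proof -
  have JD: "J \<in> D n" using descendantsD[OF J] by simp
  let ?b = "stopped_ratio n J"
  have s1: "(\<Sum>K\<in>descendants n J m. measure nu K) = measure nu J"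
    by (rule dyadic_additive_sum[OF measure_dyadic_additive[OF nu_radon] JD])
  have s2: "(\<Sum>K\<in>descendants n J m. stopped_ratio (n+m) K * measure nu K) = ?b * measure nu J"
    by (rule stopped_ratio_sum[OF J])
  have "(\<Sum>K\<in>descendants n J m. measure nu K * (stopped_ratio (n+m) K - c)^2)
     = (\<Sum>K\<in>descendants n J m. measure nu K * (stopped_ratio (n+m) K - ?b)^2
          + (2 * (?b - c)) * (stopped_ratio (n+m) K * measure nu K)
            + (?b - c)^2 * measure nu K - (2 * (?b - c) * ?b) * measure nu K)"
    by (intro sum.cong refl) (simp add: power2_eq_square algebra_simps)
  also have "\<dots> = energy J n m + (2 * (?b - c)) * (?b * measure nu J)
      + (?b - c)^2 * measure nu J - (2 * (?b - c) * ?b) * measure nu J"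
    unfolding energy_def by (simp add: sum.distrib sum_subtractf sum_distrib_left[symmetric] s1 s2)
  also have "\<dots> = energy J n m + measure nu J * (stopped_ratio n J - c)^2"
    by (simp add: algebra_simps)
  finally show ?thesis .
qed

lemma sum_energy_eq:
  "(\<Sum>J\<in>descendants 0 Q k. energy J k i) = total_energy (k + i) - total_energy k"
proof -
  let ?f = "\<lambda>K. measure nu K * (stopped_ratio (k + i) K - stopped_ratio 0 Q)^2"
  have "total_energy (k + i) = (\<Sum>J\<in>descendants 0 Q k. \<Sum>K\<in>descendants k J i. ?f K)"
    unfolding total_energy_def energy_def using sum_descendants_add[OF Q, of ?f k i] by simp
  also have "\<dots> = (\<Sum>J\<in>descendants 0 Q k. energy J k i
      + measure nu J * (stopped_ratio k J - stopped_ratio 0 Q)^2)"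
    by (intro sum.cong refl) (rule energy_pythagoras)
  also have "\<dots> = (\<Sum>J\<in>descendants 0 Q k. energy J k i) + total_energy k"
    unfolding total_energy_def energy_def by (simp add: sum.distrib)
  finally show ?thesis by simp
qed

lemma total_energy_bounds: "0 \<le> total_energy m" "total_energy m \<le> ratio_bound^2 * measure nu Q"
proof -
  show "0 \<le> total_energy m" unfolding total_energy_def by (rule energy_nonneg)
  have Q0: "Q \<in> descendants 0 Q 0" using descendants_0[OF Q] by simp
  have bQ: "0 \<le> stopped_ratio 0 Q" "stopped_ratio 0 Q \<le> ratio_bound"
    using stopped_ratio_bounds[OF Q0] by auto
  have "total_energy m \<le> (\<Sum>K\<in>descendants 0 Q m. measure nu K * ratio_bound^2)"
    unfolding total_energy_def energy_def
  proof (rule sum_mono)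
    fix K assume K: "K \<in> descendants 0 Q m"
    have b: "0 \<le> stopped_ratio (0+m) K" "stopped_ratio (0+m) K \<le> ratio_bound"
      using stopped_ratio_bounds[of K m] K by auto
    have "\<bar>stopped_ratio (0+m) K - stopped_ratio 0 Q\<bar> \<le> ratio_bound" using b bQ by linarith
    then have "(stopped_ratio (0+m) K - stopped_ratio 0 Q)^2 \<le> ratio_bound^2"
      by (metis abs_le_square_iff abs_of_nonneg b(1) order.trans abs_ge_zero)
    then show "measure nu K * (stopped_ratio (0+m) K - stopped_ratio 0 Q)^2
        \<le> measure nu K * ratio_bound^2"
      by (intro mult_left_mono) auto
  qed
  also have "\<dots> = ratio_bound^2 * measure nu Q"
    using dyadic_additive_sum[OF measure_dyadic_additive[OF nu_radon] Q, of m]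
    by (simp add: sum_distrib_right[symmetric] mult.commute)
  finally show "total_energy m \<le> ratio_bound^2 * measure nu Q" .
qed

definition tree_mass :: "nat \<Rightarrow> real" where
  "tree_mass m = (\<Sum>P\<in>descendants 0 Q m. if in_tree m P then measure mu P else 0)"

definition tree_mass_within :: "real set \<Rightarrow> nat \<Rightarrow> nat \<Rightarrow> real" where
  "tree_mass_within I k i =
    (\<Sum>P\<in>descendants k I i. if in_tree (k + i) P then measure mu P else 0)"

lemma sum_tree_mass_within:
  "(\<Sum>I\<in>descendants 0 Q k. if in_tree k I then tree_mass_within I k i else 0) = tree_mass (k+i)"
proof -
  have "(\<Sum>I\<in>descendants 0 Q k. if in_tree k I then tree_mass_within I k i else 0)
      = (\<Sum>I\<in>descendants 0 Q k. tree_mass_within I k i)"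
  proof (rule sum.cong[OF refl])
    fix I assume I: "I \<in> descendants 0 Q k"
    have ID: "I \<in> D k" using descendantsD[OF I] by simp
    show "(if in_tree k I then tree_mass_within I k i else 0) = tree_mass_within I k i"
    proof (cases "in_tree k I")
      case False
      have "tree_mass_within I k i = 0" unfolding tree_mass_within_def
      proof (intro sum.neutral ballI)
        fix P assume P: "P \<in> descendants k I i"
        have PD: "P \<in> D (k+i)" "P \<subseteq> I" using descendantsD[OF P] by auto
        have "ancestor k P = I" by (rule ancestor_eq[OF PD(1) ID PD(2)])
        then show "(if in_tree (k+i) P then measure mu P else 0) = 0"
          using in_tree_ancestor[of k i P] False by auto
      qed
      then show ?thesis by simp
    qed simp
  qed
  also have "\<dots> = tree_mass (k+i)" unfolding tree_mass_within_def tree_mass_def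
    using sum_descendants_add[OF Q, of "\<lambda>P. if in_tree (k+i) P then measure mu P else 0" k i]
    by simp
  finally show ?thesis .
qed

lemma tree_mass_bounds: "0 \<le> tree_mass m" "tree_mass m \<le> measure mu Q"
proof -
  show "0 \<le> tree_mass m" unfolding tree_mass_def by (intro sum_nonneg) auto
  have "tree_mass m \<le> (\<Sum>P\<in>descendants 0 Q m. measure mu P)" unfolding tree_mass_def
    by (intro sum_mono) auto
  also have "\<dots> = measure mu Q"
    by (rule dyadic_additive_sum[OF measure_dyadic_additive[OF mu_radon] Q])
  finally show "tree_mass m \<le> measure mu Q" .
qed

definition density_term :: "real set \<Rightarrow> nat \<Rightarrow> nat \<Rightarrow> real" where
  "density_term I k n = (\<Sum>J\<in>descendants k I n.
    \<bar>stopped_ratio (k + n) J * measure nu J / measure mu I - measure nu J / measure nu I\<bar>)"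

definition stopping_term :: "real set \<Rightarrow> nat \<Rightarrow> nat \<Rightarrow> real" where
  "stopping_term I k n =
    (\<Sum>J\<in>descendants k I n. \<bar>measure mu J - stopped_ratio (k + n) J * measure nu J\<bar>)"

lemma in_tree_pos:
  assumes "in_tree k I"
  shows "0 < measure nu I" "0 < measure mu I"
    "measure mu I = stopped_ratio k I * measure nu I" "lo \<le> stopped_ratio k I"
proof -
  have g: "good I" by (rule in_tree_good[OF assms])
  show n: "0 < measure nu I" using g unfolding good_def by simp
  show e: "measure mu I = stopped_ratio k I * measure nu I"
    using good_measure_eq[OF g] stopped_ratio_in_tree[OF assms] by simp
  show d: "lo \<le> stopped_ratio k I" by (rule lo_le_stopped_ratio[OF assms])
  show "0 < measure mu I" using e n d lo_pos by simp
qed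

lemma variation_split:
  assumes T: "in_tree k I"
  shows "variation mu nu I k n \<le> density_term I k n + stopping_term I k n / measure mu I"
proof -
  have m: "0 < measure mu I" using in_tree_pos[OF T] by simp
  have "\<bar>measure mu J / measure mu I - measure nu J / measure nu I\<bar>
      \<le> \<bar>stopped_ratio (k + n) J * measure nu J / measure mu I - measure nu J / measure nu I\<bar>
        + \<bar>measure mu J - stopped_ratio (k + n) J * measure nu J\<bar> / measure mu I" for J
  proof -
    let ?r = "stopped_ratio (k + n) J * measure nu J"
    have "measure mu J / measure mu I - measure nu J / measure nu I
        = (?r / measure mu I - measure nu J / measure nu I) + (measure mu J - ?r) / measure mu I"
      by (simp add: diff_divide_distrib)
    then have "\<bar>measure mu J / measure mu I - measure nu J / measure nu I\<bar>
        \<le> \<bar>?r / measure mu I - measure nu J / measure nu I\<bar> + \<bar>(measure mu J - ?r) / measure mu I\<bar>"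
      by (metis abs_triangle_ineq)
    then show ?thesis using m by (simp add: abs_divide)
  qed
  then show ?thesis unfolding variation_def rel_mass_diff_def density_term_def stopping_term_def
    by (simp add: sum_divide_distrib flip: sum.distrib) (intro sum_mono)
qed

lemma density_term_bound:
  assumes T: "in_tree k I"
  shows "measure mu I * (density_term I k n)^2 \<le> energy I k n / lo"
proof -
  note p = in_tree_pos[OF T]
  let ?a = "stopped_ratio k I" and ?nI = "measure nu I"
  have apos: "0 < ?a" using p(4) lo_pos by simp
  have ID: "I \<in> D k" using descendantsD[OF in_tree_descendants[OF T]] by simp
  define w where "w J = measure nu J / ?nI" for J
  define x where "x J = \<bar>stopped_ratio (k+n) J - ?a\<bar> / ?a" for J
  have w0: "\<And>J. 0 \<le> w J" unfolding w_def using p by simp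
  have wsum: "(\<Sum>J\<in>descendants k I n. w J) = 1"
    unfolding w_def using dyadic_additive_sum[OF measure_dyadic_additive[OF nu_radon] ID, of n] p
    by (simp add: sum_divide_distrib[symmetric])
  have bt_eq: "density_term I k n = (\<Sum>J\<in>descendants k I n. w J * x J)"
    unfolding density_term_def
  proof (rule sum.cong[OF refl])
    fix J
    have "stopped_ratio (k+n) J * measure nu J / measure mu I - measure nu J / ?nI
        = w J * ((stopped_ratio (k+n) J - ?a) / ?a)"
      unfolding w_def p(3) using p apos by (simp add: field_simps)
    then show "\<bar>stopped_ratio (k+n) J * measure nu J / measure mu I - measure nu J / ?nI\<bar>
        = w J * x J"
      unfolding x_def using w0[of J] apos by (simp add: abs_mult abs_divide)
  qed
  have "(density_term I k n)^2
      \<le> (\<Sum>J\<in>descendants k I n. w J) * (\<Sum>J\<in>descendants k I n. w J * (x J)^2)"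
    unfolding bt_eq by (rule weighted_Cauchy_Schwarz) (rule w0)
  also have "\<dots> = (\<Sum>J\<in>descendants k I n. w J * (x J)^2)" using wsum by simp
  finally have b2: "(density_term I k n)^2 \<le> (\<Sum>J\<in>descendants k I n. w J * (x J)^2)" .
  have "measure mu I * (density_term I k n)^2
      \<le> measure mu I * (\<Sum>J\<in>descendants k I n. w J * (x J)^2)"
    using b2 p by (intro mult_left_mono) auto
  also have "\<dots> = energy I k n / ?a"
    unfolding energy_def sum_distrib_left sum_divide_distrib
  proof (rule sum.cong[OF refl])
    fix J
    show "measure mu I * (w J * (x J)^2) = measure nu J * (stopped_ratio (k+n) J - ?a)^2 / ?a"
      unfolding p(3) w_def x_def using p apos by (simp add: field_simps power2_eq_square)
  qed
  also have "\<dots> \<le> energy I k n / lo"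
    using energy_nonneg[of I k n] p(4) lo_pos by (intro divide_left_mono) auto
  finally show ?thesis .
qed

text \<open>Inside the tree the stopped ratio of a child is its own ratio, so the children of a tree cell
  contribute no stopping error; the children of any other cell contribute at most their total
  \<open>\<mu>\<close>- and \<open>\<rho>\<nu>\<close>-mass.\<close>

lemma children_stopping_error_le:
  assumes PQ: "P \<in> descendants 0 Q m"
  shows "(\<Sum>J\<in>descendants m P 1. \<bar>measure mu J - stopped_ratio (Suc m) J * measure nu J\<bar>)
    \<le> measure mu P + stopped_ratio m P * measure nu P
      - 2 * (if in_tree m P then measure mu P else 0)"
proof (cases "in_tree m P")
  case True
  have PD: "P \<in> D m" using descendantsD[OF PQ] by simp
  have "\<bar>measure mu J - stopped_ratio (Suc m) J * measure nu J\<bar>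
      = 0" if J: "J \<in> descendants m P 1" for J
  proof -
    have "stopped_ratio (Suc m) J = ratio J" using ancestor_child[OF PD J] True by simp
    moreover have "0 < measure nu J" by (rule child_measure_pos[OF in_tree_good[OF True] PD J])
    ultimately show ?thesis by (simp add: ratio_def)
  qed
  then show ?thesis
    using True good_measure_eq[OF in_tree_good[OF True]] stopped_ratio_in_tree[OF True] by simp
next
  case False
  have PD: "P \<in> D m" using descendantsD[OF PQ] by simp
  have "(\<Sum>J\<in>descendants m P 1. \<bar>measure mu J - stopped_ratio (Suc m) J * measure nu J\<bar>)
      \<le> (\<Sum>J\<in>descendants m P 1. measure mu J + stopped_ratio (Suc m) J * measure nu J)"
  proof (rule sum_mono)
    fix J assume "J \<in> descendants m P 1"
    then have "J \<in> descendants 0 Q (m + 1)" by (rule descendants_0_trans[OF PQ])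
    then have "0 \<le> stopped_ratio (Suc m) J" using stopped_ratio_bounds[of J "Suc m"] by simp
    then show "\<bar>measure mu J - stopped_ratio (Suc m) J * measure nu J\<bar>
        \<le> measure mu J + stopped_ratio (Suc m) J * measure nu J"
      by (simp add: abs_le_iff)
  qed
  also have "\<dots> = measure mu P + stopped_ratio m P * measure nu P"
    using dyadic_additive_sum[OF measure_dyadic_additive[OF mu_radon] PD, of 1]
      stopped_ratio_additive[OF PQ]
    by (simp add: sum.distrib)
  finally show ?thesis using False by simp
qed

lemma stopping_term_bound:
  assumes T: "in_tree k I"
  shows "stopping_term I k (Suc i) \<le> 2 * (measure mu I - tree_mass_within I k i)"
proof -
  have I: "I \<in> descendants 0 Q k" by (rule in_tree_descendants[OF T])
  have ID: "I \<in> D k" using descendantsD[OF I] by simp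
  let ?e = "\<lambda>J. \<bar>measure mu J - stopped_ratio (Suc (k + i)) J * measure nu J\<bar>"
  have "stopping_term I k (Suc i) = (\<Sum>P\<in>descendants k I i. \<Sum>J\<in>descendants (k + i) P 1. ?e J)"
    unfolding stopping_term_def using sum_descendants_add[OF ID, of ?e i 1] by simp
  also have "\<dots> \<le> (\<Sum>P\<in>descendants k I i. measure mu P + stopped_ratio (k + i) P * measure nu P
      - 2 * (if in_tree (k + i) P then measure mu P else 0))"
    using children_stopping_error_le descendants_0_trans[OF I] by (intro sum_mono) auto
  also have "\<dots> = measure mu I + stopped_ratio k I * measure nu I - 2 * tree_mass_within I k i"
    unfolding tree_mass_within_def
    using dyadic_additive_sum[OF measure_dyadic_additive[OF mu_radon] ID, of i]
      stopped_ratio_sum[OF I, of i]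
    by (simp add: sum.distrib sum_subtractf sum_distrib_left[symmetric])
  also have "\<dots> = 2 * (measure mu I - tree_mass_within I k i)" using in_tree_pos(3)[OF T] by simp
  finally show ?thesis .
qed

lemma tree_mass_within_bounds:
  assumes T: "in_tree k I"
  shows "tree_mass_within I k i \<le> measure mu I" "0 \<le> tree_mass_within I k i"
proof -
  have ID: "I \<in> D k" using descendantsD[OF in_tree_descendants[OF T]] by simp
  have "tree_mass_within I k i \<le> (\<Sum>P\<in>descendants k I i. measure mu P)"
    unfolding tree_mass_within_def by (intro sum_mono) auto
  also have "\<dots> = measure mu I"
    by (rule dyadic_additive_sum[OF measure_dyadic_additive[OF mu_radon] ID])
  finally show "tree_mass_within I k i \<le> measure mu I" .
  show "0 \<le> tree_mass_within I k i" unfolding tree_mass_within_def by (intro sum_nonneg) auto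
qed

lemma stopping_term_nonneg: "0 \<le> stopping_term I k n"
  unfolding stopping_term_def by (intro sum_nonneg) auto

lemma alpha_le_tree_terms:
  assumes T: "in_tree k I"
  shows "alpha mu nu I \<le> (\<Sum>i<N. (1/2)^i * density_term I k (Suc i))
    + (\<Sum>i<N. (1/2)^i * stopping_term I k (Suc i)) / measure mu I + 2 * (1/2)^N"
proof -
  note p = in_tree_pos[OF T]
  have ID: "I \<in> D k" using descendantsD[OF in_tree_descendants[OF T]] by simp
  have "alpha mu nu I \<le> (\<Sum>i<N. (1/2)^i * variation mu nu I k (Suc i)) + 2 * (1/2)^N"
    by (rule alpha_le_variation[OF mu_radon nu_radon ID p(2) p(1)])
  also have "(\<Sum>i<N. (1/2::real)^i * variation mu nu I k (Suc i))
      \<le> (\<Sum>i<N. (1/2)^i * (density_term I k (Suc i) + stopping_term I k (Suc i) / measure mu I))"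
    using variation_split[OF T] by (intro sum_mono mult_left_mono) auto
  also have "\<dots> = (\<Sum>i<N. (1/2)^i * density_term I k (Suc i))
      + (\<Sum>i<N. (1/2)^i * stopping_term I k (Suc i)) / measure mu I"
    by (simp add: sum.distrib distrib_left sum_divide_distrib)
  finally show ?thesis by simp
qed

lemma density_terms_sq_le:
  assumes T: "in_tree k I"
  shows "measure mu I * (\<Sum>i<N. (1/2)^i * density_term I k (Suc i))^2
    \<le> (2 / lo) * (\<Sum>i<N. (1/2)^i * energy I k (Suc i))"
proof -
  have "(\<Sum>i<N. (1/2::real)^i * density_term I k (Suc i))^2
      \<le> (\<Sum>i<N. (1/2::real)^i) * (\<Sum>i<N. (1/2)^i * (density_term I k (Suc i))^2)"
    by (rule weighted_Cauchy_Schwarz) simp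
  also have "\<dots> \<le> 2 * (\<Sum>i<N. (1/2)^i * (density_term I k (Suc i))^2)"
    using sum_half_powers_le[of N] by (intro mult_right_mono sum_nonneg) auto
  finally have "measure mu I * (\<Sum>i<N. (1/2::real)^i * density_term I k (Suc i))^2
      \<le> measure mu I * (2 * (\<Sum>i<N. (1/2)^i * (density_term I k (Suc i))^2))"
    by (rule mult_left_mono) simp
  also have "\<dots> = 2 * (\<Sum>i<N. (1/2)^i * (measure mu I * (density_term I k (Suc i))^2))"
    by (simp add: sum_distrib_left algebra_simps)
  also have "\<dots> \<le> 2 * (\<Sum>i<N. (1/2)^i * (energy I k (Suc i) / lo))"
    using density_term_bound[OF T] by (intro mult_left_mono sum_mono) auto
  finally show ?thesis by (simp add: sum_distrib_left sum_divide_distrib)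
qed

lemma stopping_terms_le:
  assumes T: "in_tree k I"
  shows "(\<Sum>i<N. (1/2)^i * stopping_term I k (Suc i))
      \<le> 2 * (\<Sum>i<N. (1/2)^i * (measure mu I - tree_mass_within I k i))"
    and "(\<Sum>i<N. (1/2)^i * stopping_term I k (Suc i)) \<le> 4 * measure mu I"
proof -
  show *: "(\<Sum>i<N. (1/2::real)^i * stopping_term I k (Suc i))
      \<le> 2 * (\<Sum>i<N. (1/2)^i * (measure mu I - tree_mass_within I k i))"
    using stopping_term_bound[OF T] by (simp add: sum_distrib_left mult.left_commute sum_mono)
  have "(\<Sum>i<N. (1/2::real)^i * (measure mu I - tree_mass_within I k i))
      \<le> (\<Sum>i<N. (1/2)^i * measure mu I)"
    using tree_mass_within_bounds[OF T] by (intro sum_mono mult_left_mono) auto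
  also have "\<dots> \<le> 2 * measure mu I"
    using sum_half_powers_le[of N] by (simp add: sum_distrib_right[symmetric] mult_right_mono)
  finally have "(\<Sum>i<N. (1/2::real)^i * (measure mu I - tree_mass_within I k i)) \<le> 2 * measure mu I" .
  with * show "(\<Sum>i<N. (1/2::real)^i * stopping_term I k (Suc i)) \<le> 4 * measure mu I"
    by simp
qed

lemma tree_alpha_sq_bound:
  assumes T: "in_tree k I"
  shows "measure mu I * (alpha mu nu I)^2 \<le> (6/lo) * (\<Sum>i<N. (1/2)^i * energy I k (Suc i))
      + 24 * (\<Sum>i<N. (1/2)^i * (measure mu I - tree_mass_within I k i))
        + 12 * (1/4)^N * measure mu I"
proof -
  define m where "m = measure mu I"
  define A where "A = (\<Sum>i<N. (1/2::real)^i * density_term I k (Suc i))"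
  define S where "S = (\<Sum>i<N. (1/2::real)^i * stopping_term I k (Suc i))"
  have m: "0 < m" using in_tree_pos[OF T] unfolding m_def by simp
  have S0: "0 \<le> S" unfolding S_def using stopping_term_nonneg by (intro sum_nonneg) auto
  have ID: "I \<in> D k" using descendantsD[OF in_tree_descendants[OF T]] by simp
  have "0 \<le> alpha mu nu I" using alpha_nonneg[OF mu_radon nu_radon ID] in_tree_pos[OF T] by simp
  moreover have "alpha mu nu I \<le> A + S / m + 2 * (1/2)^N"
    using alpha_le_tree_terms[OF T] unfolding A_def S_def m_def by simp
  ultimately have "(alpha mu nu I)^2 \<le> (A + S / m + 2 * (1/2)^N)^2" by (intro power_mono) auto
  also have "\<dots> \<le> 3 * A^2 + 3 * (S / m)^2 + 3 * (2 * (1/2)^N)^2" by (rule square_sum3_le)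
  finally have "m * (alpha mu nu I)^2 \<le> m * (3 * A^2 + 3 * (S / m)^2 + 3 * (2 * (1/2)^N)^2)"
    by (rule mult_left_mono) (use m in simp)
  also have "(2 * (1/2::real)^N)^2 = 4 * (1/4)^N"
    by (simp add: power_mult_distrib power2_eq_square flip: power_mult_distrib)
  also have "m * (3 * A^2 + 3 * (S / m)^2 + 3 * (4 * (1/4)^N))
      = 3 * (m * A^2) + 3 * (S * (S / m)) + 12 * (1/4)^N * m"
    using m by (simp add: power2_eq_square field_simps)
  also have "S * (S / m) \<le> S * 4" using stopping_terms_le(2)[OF T] S0 m unfolding S_def m_def
    by (intro mult_left_mono) (auto simp: field_simps)
  finally show ?thesis
    using density_terms_sq_le[OF T, of N] stopping_terms_le(1)[OF T, of N]
    unfolding A_def S_def m_def by simp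
qed

definition tree_level :: "nat \<Rightarrow> real set set" where
  "tree_level k = {I \<in> descendants 0 Q k. in_tree k I}"

lemma finite_tree_level: "finite (tree_level k)"
  unfolding tree_level_def using finite_descendants[OF Q] by simp

lemma sum_tree_level:
  "(\<Sum>I\<in>tree_level k. f I) = (\<Sum>I\<in>descendants 0 Q k. if in_tree k I then f I else 0)"
  unfolding tree_level_def by (rule sum.inter_filter[OF finite_descendants[OF Q]])

lemma sum_tree_level_measure: "(\<Sum>I\<in>tree_level k. measure mu I) = tree_mass k"
  unfolding sum_tree_level tree_mass_def ..

lemma sum_tree_level_energy_le:
  "(\<Sum>I\<in>tree_level k. \<Sum>i<N. (1/2)^i * energy I k (Suc i))
    \<le> (\<Sum>i<N. (1/2)^i * (total_energy (k + Suc i) - total_energy k))"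
proof -
  have "(\<Sum>I\<in>tree_level k. \<Sum>i<N. (1/2::real)^i * energy I k (Suc i))
      \<le> (\<Sum>I\<in>descendants 0 Q k. \<Sum>i<N. (1/2)^i * energy I k (Suc i))"
    unfolding tree_level_def using energy_nonneg finite_descendants[OF Q]
    by (intro sum_mono2) (auto intro!: sum_nonneg)
  also have "\<dots> = (\<Sum>i<N. (1/2)^i * (\<Sum>I\<in>descendants 0 Q k. energy I k (Suc i)))"
    by (subst sum.swap) (simp add: sum_distrib_left)
  finally show ?thesis by (simp only: sum_energy_eq)
qed

lemma sum_tree_level_mass_within:
  "(\<Sum>I\<in>tree_level k. \<Sum>i<N. (1/2)^i * (measure mu I - tree_mass_within I k i))
    = (\<Sum>i<N. (1/2)^i * (tree_mass k - tree_mass (k + i)))"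
proof -
  have "(\<Sum>I\<in>tree_level k. tree_mass_within I k i) = tree_mass (k + i)" for i
    unfolding sum_tree_level by (rule sum_tree_mass_within)
  then show ?thesis
    by (subst sum.swap) (simp add: sum_distrib_left[symmetric] sum_subtractf sum_tree_level_measure)
qed

lemma sum_tree_level_bound:
  "(\<Sum>I\<in>tree_level k. measure mu I * (alpha mu nu I)^2)
     \<le> (6/lo) * (\<Sum>i<N. (1/2)^i * (total_energy (k + Suc i) - total_energy k))
       + 24 * (\<Sum>i<N. (1/2)^i * (tree_mass k - tree_mass (k + i))) + 12 * (1/4)^N * tree_mass k"
proof -
  have "(\<Sum>I\<in>tree_level k. measure mu I * (alpha mu nu I)^2)
      \<le> (\<Sum>I\<in>tree_level k. (6/lo) * (\<Sum>i<N. (1/2)^i * energy I k (Suc i))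
          + 24 * (\<Sum>i<N. (1/2)^i * (measure mu I - tree_mass_within I k i))
            + 12 * (1/4)^N * measure mu I)"
    by (rule sum_mono) (rule tree_alpha_sq_bound, simp add: tree_level_def)
  also have "\<dots> = (6/lo) * (\<Sum>I\<in>tree_level k. \<Sum>i<N. (1/2)^i * energy I k (Suc i))
      + 24 * (\<Sum>i<N. (1/2)^i * (tree_mass k - tree_mass (k + i))) + 12 * (1/4)^N * tree_mass k"
    by (simp only: sum.distrib sum_distrib_left[symmetric] sum_tree_level_mass_within
        sum_tree_level_measure)
  also have "\<dots> \<le> (6/lo) * (\<Sum>i<N. (1/2)^i * (total_energy (k + Suc i) - total_energy k))
      + 24 * (\<Sum>i<N. (1/2)^i * (tree_mass k - tree_mass (k + i))) + 12 * (1/4)^N * tree_mass k"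
    using sum_tree_level_energy_le[of k N] lo_pos by (intro add_right_mono mult_left_mono) auto
  finally show ?thesis .
qed

lemma sum_energy_increments_le:
  "(\<Sum>k<N. \<Sum>i<N. (1/2)^i * (total_energy (k + Suc i) - total_energy k))
    \<le> 4 * ratio_bound^2 * measure nu Q"
proof -
  let ?B = "ratio_bound^2 * measure nu Q"
  have "(\<Sum>k<N. \<Sum>i<N. (1/2::real)^i * (total_energy (k + Suc i) - total_energy k))
      = (\<Sum>i<N. (1/2)^i * (\<Sum>k<N. total_energy (k + Suc i) - total_energy k))"
    by (subst sum.swap) (simp add: sum_distrib_left)
  also have "\<dots> \<le> (\<Sum>i<N. (1/2)^i * (real (Suc i) * ?B))"
  proof (intro sum_mono mult_left_mono)
    show "(\<Sum>k<N. total_energy (k + Suc i) - total_energy k) \<le> real (Suc i) * ?B" for i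
      using sum_shift_diff_le[of 0 total_energy ?B "Suc i" N] total_energy_bounds by simp
  qed simp
  also have "\<dots> = (\<Sum>i<N. (1/2)^i * real i + (1/2)^i) * ?B"
    unfolding sum_distrib_right by (intro sum.cong) (auto simp: algebra_simps)
  also have "\<dots> = ((\<Sum>i<N. (1/2)^i * real i) + (\<Sum>i<N. (1/2)^i)) * ?B"
    by (simp only: sum.distrib)
  also have "\<dots> \<le> 4 * ?B"
    using sum_half_powers_times_le[of N] sum_half_powers_le[of N] by (intro mult_right_mono) auto
  finally show ?thesis by simp
qed

lemma sum_tree_mass_decrements_le:
  "(\<Sum>k<N. \<Sum>i<N. (1/2)^i * (tree_mass k - tree_mass (k + i))) \<le> 2 * measure mu Q"
proof -
  have "(\<Sum>k<N. \<Sum>i<N. (1/2::real)^i * (tree_mass k - tree_mass (k + i)))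
      = (\<Sum>i<N. (1/2)^i * (\<Sum>k<N. (- tree_mass (k + i)) - (- tree_mass k)))"
    by (subst sum.swap) (simp add: sum_distrib_left)
  also have "\<dots> \<le> (\<Sum>i<N. (1/2)^i * (real i * measure mu Q))"
  proof (intro sum_mono mult_left_mono)
    show "(\<Sum>k<N. (- tree_mass (k + i)) - (- tree_mass k)) \<le> real i * measure mu Q" for i
      using sum_shift_diff_le[of "- measure mu Q" "\<lambda>k. - tree_mass k" 0 i N] tree_mass_bounds
      by simp
  qed simp
  also have "\<dots> = (\<Sum>i<N. (1/2)^i * real i) * measure mu Q"
    by (simp only: sum_distrib_right mult.assoc)
  also have "\<dots> \<le> 2 * measure mu Q"
    using sum_half_powers_times_le[of N] by (intro mult_right_mono) auto
  finally show ?thesis .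
qed

lemma sum_tree_mass_le: "(1/4)^N * (\<Sum>k<N. tree_mass k) \<le> measure mu Q"
proof -
  have "(1/4::real)^N * (\<Sum>k<N. tree_mass k) \<le> (1/2)^N * (real N * measure mu Q)"
    using sum_mono[of "{..<N}" tree_mass "\<lambda>_. measure mu Q"] tree_mass_bounds
    by (intro mult_mono power_mono sum_nonneg) auto
  also have "\<dots> = (real N * (1/2)^N) * measure mu Q" by (simp add: algebra_simps)
  also have "\<dots> \<le> measure mu Q"
    using times_half_power_le_1[of N] by (intro mult_left_le_one_le) auto
  finally show ?thesis .
qed

definition tree_bound :: real where
  "tree_bound = (24/lo) * ratio_bound^2 * measure nu Q + 60 * measure mu Q"

lemma sum_tree_alpha_bound:
  "(\<Sum>k<N. \<Sum>I\<in>tree_level k. measure mu I * (alpha mu nu I)^2) \<le> tree_bound"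
proof -
  have "(\<Sum>k<N. \<Sum>I\<in>tree_level k. measure mu I * (alpha mu nu I)^2)
      \<le> (\<Sum>k<N. (6/lo) * (\<Sum>i<N. (1/2)^i * (total_energy (k + Suc i) - total_energy k))
        + 24 * (\<Sum>i<N. (1/2)^i * (tree_mass k - tree_mass (k + i))) + 12 * (1/4)^N * tree_mass k)"
    by (rule sum_mono) (rule sum_tree_level_bound)
  also have "\<dots> = (6/lo) * (\<Sum>k<N. \<Sum>i<N. (1/2)^i * (total_energy (k + Suc i) - total_energy k))
        + 24 * (\<Sum>k<N. \<Sum>i<N. (1/2)^i * (tree_mass k - tree_mass (k + i)))
        + 12 * ((1/4)^N * (\<Sum>k<N. tree_mass k))"
    by (simp only: sum.distrib sum_distrib_left[symmetric] mult.assoc)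
  also have "\<dots> \<le> (6/lo) * (4 * ratio_bound^2 * measure nu Q) + 24 * (2 * measure mu Q)
      + 12 * measure mu Q"
    using sum_energy_increments_le sum_tree_mass_decrements_le sum_tree_mass_le lo_pos
    by (intro add_mono mult_left_mono) auto
  finally show ?thesis unfolding tree_bound_def by simp
qed

definition level_square_fn :: "nat \<Rightarrow> real \<Rightarrow> ennreal" where
  "level_square_fn k x = (\<Sum>I\<in>tree_level k. ennreal ((alpha mu nu I)^2) * indicator I x)"

definition tree_square_fn :: "real \<Rightarrow> ennreal" where "tree_square_fn x = (\<Sum>k. level_square_fn k x)"

definition tree_points :: "real set" where
  "tree_points = {x \<in> Q. \<forall>k I. I \<in> D k \<longrightarrow> x \<in> I \<longrightarrow> good I}"

lemma tree_points_in_tree: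
  "x \<in> tree_points \<Longrightarrow> I \<in> D k \<Longrightarrow> x \<in> I \<Longrightarrow> in_tree k I"
proof (induction k arbitrary: I)
  case 0
  have xQ: "x \<in> Q" using 0 unfolding tree_points_def by simp
  have "I = Q" by (rule cell_unique[OF 0(2) Q 0(3) xQ])
  then show ?case using good_root by simp
next
  case (Suc k)
  let ?P = "ancestor k I"
  have p: "?P \<in> D k" "I \<subseteq> ?P" using ancestor_cell[OF Suc.prems(2)] by auto
  have xP: "x \<in> ?P" using p(2) Suc.prems(3) by blast
  have tP: "in_tree k ?P" by (rule Suc.IH[OF Suc.prems(1) p(1) xP])
  have "?P \<subseteq> Q" using descendantsD[OF in_tree_descendants[OF tP]] by simp
  then have "I \<in> descendants 0 Q (Suc k)" using p(2) Suc.prems(2) unfolding descendants_def by auto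
  moreover have "good I" using Suc.prems unfolding tree_points_def by blast
  ultimately show ?case using tP by simp
qed

lemma tree_level_disjoint: "k \<noteq> k' \<Longrightarrow> tree_level k \<inter> tree_level k' = {}"
  unfolding tree_level_def descendants_def using cell_level_unique by auto

lemma square_function_le_tree_square_fn:
  assumes x: "x \<in> tree_points"
  shows "square_function D mu nu x \<le> tree_square_fn x"
  unfolding square_function_def
proof (rule infsum_le_finite_sums)
  let ?f = "\<lambda>I. ennreal ((alpha mu nu I)^2 * indicator I x)"
  show "?f summable_on (\<Union>k. D k)" by (rule nonneg_summable_on_complete) simp
  fix F assume F: "finite F" "F \<subseteq> (\<Union>k. D k)"
  then have "\<forall>I\<in>F. \<exists>k. I \<in> D k" by blast
  then obtain lv where lv: "\<forall>I\<in>F. I \<in> D (lv I)" by (rule bchoice[THEN exE])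
  define U where "U = (\<Union>k\<le>Max (lv ` F). tree_level k)"
  have "I \<in> U" if "I \<in> F" "x \<in> I" for I
  proof -
    have "in_tree (lv I) I" using tree_points_in_tree[OF x] lv that by blast
    then have "I \<in> tree_level (lv I)" unfolding tree_level_def using in_tree_descendants by blast
    moreover have "lv I \<le> Max (lv ` F)" using F(1) that(1) by simp
    ultimately show ?thesis unfolding U_def by blast
  qed
  then have "sum ?f F = sum ?f (F \<inter> U)"
    using F(1) by (intro sum.mono_neutral_cong_right) (auto simp: indicator_def)
  also have "\<dots> \<le> sum ?f U" unfolding U_def using finite_tree_level by (intro sum_mono2) auto
  also have "\<dots> = (\<Sum>k\<le>Max (lv ` F). level_square_fn k x)"
    unfolding U_def level_square_fn_def
    by (subst sum.UNION_disjoint) (auto simp: finite_tree_level tree_level_disjoint ennreal_mult'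
        ennreal_indicator intro!: sum.cong)
  also have "\<dots> \<le> tree_square_fn x"
    unfolding tree_square_fn_def by (rule sum_le_suminf) simp_all
  finally show "sum ?f F \<le> tree_square_fn x" .
qed

lemma sets_mu: "sets mu = sets borel" by (rule sets_radon_measure[OF mu_radon])

lemma tree_level_cell: "I \<in> tree_level k \<Longrightarrow> I \<in> D k"
  unfolding tree_level_def using descendantsD[of I 0 Q k] by auto

lemma level_square_fn_measurable: "level_square_fn k \<in> borel_measurable mu"
proof -
  have bM: "borel_measurable mu = borel_measurable (borel::real measure)"
    by (rule measurable_cong_sets[OF sets_mu refl])
  show ?thesis unfolding bM level_square_fn_def
    using tree_level_cell cell_borel
    by (intro borel_measurable_sum borel_measurable_times_ennreal) auto
qed

lemma nn_integral_level_square_fn: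
  "integral\<^sup>N mu (level_square_fn k) = ennreal (\<Sum>I\<in>tree_level k. measure mu I * (alpha mu nu I)^2)"
proof -
  have "integral\<^sup>N mu (level_square_fn k)
      = (\<Sum>I\<in>tree_level k. \<integral>\<^sup>+x. ennreal ((alpha mu nu I)^2) * indicator I x \<partial>mu)"
    unfolding level_square_fn_def
  proof (rule nn_integral_sum)
    fix I assume "I \<in> tree_level k"
    then have "I \<in> sets mu" using tree_level_cell cell_borel sets_mu by auto
    then show "(\<lambda>x. ennreal ((alpha mu nu I)^2) * indicator I x) \<in> borel_measurable mu" by simp
  qed
  also have "\<dots> = (\<Sum>I\<in>tree_level k. ennreal ((alpha mu nu I)^2) * emeasure mu I)"
  proof (rule sum.cong[OF refl])
    fix I assume "I \<in> tree_level k"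
    then have "I \<in> sets mu" using tree_level_cell cell_borel sets_mu by auto
    then show "(\<integral>\<^sup>+x. ennreal ((alpha mu nu I)^2) * indicator I x \<partial>mu)
        = ennreal ((alpha mu nu I)^2) * emeasure mu I"
      by (rule nn_integral_cmult_indicator)
  qed
  also have "\<dots> = (\<Sum>I\<in>tree_level k. ennreal (measure mu I * (alpha mu nu I)^2))"
  proof (rule sum.cong[OF refl])
    fix I assume "I \<in> tree_level k"
    then have fin: "emeasure mu I < \<infinity>" using tree_level_cell emeasure_cell_finite[OF mu_radon]
      by auto
    have "emeasure mu I = ennreal (measure mu I)"
      by (rule emeasure_eq_ennreal_measure) (use fin in simp)
    then show "ennreal ((alpha mu nu I)^2) * emeasure mu I
        = ennreal (measure mu I * (alpha mu nu I)^2)"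
      by (simp add: ennreal_mult'' mult.commute)
  qed
  also have "\<dots> = ennreal (\<Sum>I\<in>tree_level k. measure mu I * (alpha mu nu I)^2)"
    by (rule sum_ennreal) simp
  finally show ?thesis .
qed

lemma nn_integral_tree_square_fn: "integral\<^sup>N mu tree_square_fn \<le> ennreal tree_bound"
proof -
  have "integral\<^sup>N mu tree_square_fn = (\<Sum>k. integral\<^sup>N mu (level_square_fn k))"
    unfolding tree_square_fn_def by (rule nn_integral_suminf[OF level_square_fn_measurable])
  also have "\<dots> \<le> ennreal tree_bound"
  proof (rule suminf_le_const)
    show "summable (\<lambda>k. integral\<^sup>N mu (level_square_fn k))" by simp
    fix N
    have "(\<Sum>k<N. integral\<^sup>N mu (level_square_fn k))
        = ennreal (\<Sum>k<N. \<Sum>I\<in>tree_level k. measure mu I * (alpha mu nu I)^2)"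
      by (simp add: nn_integral_level_square_fn sum_nonneg)
    also have "\<dots> \<le> ennreal tree_bound" using sum_tree_alpha_bound[of N] by (rule ennreal_leI)
    finally show "(\<Sum>k<N. integral\<^sup>N mu (level_square_fn k)) \<le> ennreal tree_bound" .
  qed
  finally show ?thesis .
qed

lemma tree_square_fn_measurable: "tree_square_fn \<in> borel_measurable mu"
  unfolding tree_square_fn_def using level_square_fn_measurable
  by (rule borel_measurable_suminf_order)

lemma AE_tree_points_square_function_finite:
  "AE x in mu. x \<in> tree_points \<longrightarrow> square_function D mu nu x < \<infinity>"
proof -
  have "integral\<^sup>N mu tree_square_fn \<noteq> \<infinity>"
    using nn_integral_tree_square_fn ennreal_less_top[of tree_bound] by (auto simp: top_unique)
  then have "AE x in mu. tree_square_fn x \<noteq> \<infinity>"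
    by (rule nn_integral_PInf_AE[OF tree_square_fn_measurable])
  then show ?thesis
    by eventually_elim (use square_function_le_tree_square_fn in \<open>auto simp: top.not_eq_extremum
      intro: le_less_trans\<close>)
qed

end

section \<open>Exhausting \<open>\<mu>\<^sub>a\<close> by stopping trees\<close>

context dyadic begin

definition maximal_cells :: "real set set \<Rightarrow> real set set" where
  "maximal_cells F = {I \<in> F. \<forall>J\<in>F. I \<subseteq> J \<longrightarrow> J = I}"

lemma maximal_cell_exists:
  assumes F: "F \<subseteq> (\<Union>k. descendants 0 Q k)" and IF: "I \<in> F"
  shows "\<exists>P\<in>maximal_cells F. I \<subseteq> P"
proof -
  obtain k where ID: "I \<in> D k" using F IF descendantsD by fastforce
  define S where "S = {j. j \<le> k \<and> ancestor j I \<in> F}"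
  have "k \<in> S" unfolding S_def using IF ancestor_eq[OF ID ID] by simp
  then have j0S: "(LEAST j. j \<in> S) \<in> S" by (rule LeastI)
  define j0 where "j0 = (LEAST j. j \<in> S)"
  let ?P = "ancestor j0 I"
  have P: "?P \<in> D j0" "I \<subseteq> ?P" "?P \<in> F" using ancestor_cell[OF ID] j0S unfolding j0_def S_def
    by auto
  have "J = ?P" if JF: "J \<in> F" and PJ: "?P \<subseteq> J" for J
  proof -
    obtain j where JD: "J \<in> D j" using F JF descendantsD by fastforce
    have "j \<le> k" using cell_level_le[OF ID JD] P(2) PJ by blast
    moreover have "ancestor j I = J" using ancestor_eq[OF ID JD] P(2) PJ by blast
    ultimately have "j \<in> S" unfolding S_def using JF by simp
    then have "j0 \<le> j" unfolding j0_def by (rule Least_le)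
    moreover have "j \<le> j0" by (rule cell_level_le[OF P(1) JD PJ])
    ultimately show "J = ?P" using \<open>ancestor j I = J\<close> by simp
  qed
  then show ?thesis using P unfolding maximal_cells_def by blast
qed

lemma Union_maximal_cells:
  assumes "F \<subseteq> (\<Union>k. descendants 0 Q k)"
  shows "\<Union>F = (\<Union>I\<in>maximal_cells F. I)"
proof
  show "\<Union>F \<subseteq> (\<Union>I\<in>maximal_cells F. I)"
  proof
    fix x assume "x \<in> \<Union>F"
    then obtain I where "I \<in> F" "x \<in> I" by blast
    then show "x \<in> (\<Union>I\<in>maximal_cells F. I)" using maximal_cell_exists[OF assms] by blast
  qed
qed (auto simp: maximal_cells_def)

lemma disjoint_maximal_cells:
  assumes "F \<subseteq> (\<Union>k. D k)"
  shows "disjoint_family_on (\<lambda>I. I) (maximal_cells F)"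
  unfolding disjoint_family_on_def
proof (intro ballI impI)
  fix I J assume I: "I \<in> maximal_cells F" and J: "J \<in> maximal_cells F" and "I \<noteq> J"
  obtain k where k: "I \<in> D k" using I assms unfolding maximal_cells_def by blast
  obtain j where j: "J \<in> D j" using J assms unfolding maximal_cells_def by blast
  show "I \<inter> J = {}"
  proof (rule ccontr)
    assume "I \<inter> J \<noteq> {}"
    then obtain x where x: "x \<in> I" "x \<in> J" by blast
    have "J \<subseteq> I \<or> I \<subseteq> J"
      using cells_nested_or_disjoint[OF k j _ x] cells_nested_or_disjoint[OF j k _ x(2,1)]
      by (meson nat_le_linear)
    then show False using I J \<open>I \<noteq> J\<close> unfolding maximal_cells_def by blast
  qed
qed

lemma emeasure_Union_cells_le:
  assumes m1: "radon_measure m1" and m2: "radon_measure m2" and Q: "Q \<in> D 0"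
    and F: "F \<subseteq> (\<Union>k. descendants 0 Q k)" and c: "0 \<le> c"
    and le: "\<And>I. I \<in> F \<Longrightarrow> measure m1 I \<le> c * measure m2 I"
  shows "emeasure m1 (\<Union>F) \<le> ennreal c * emeasure m2 Q"
proof -
  let ?F = "maximal_cells F"
  have cell: "\<exists>k. I \<in> D k \<and> I \<subseteq> Q" if "I \<in> F" for I
    using F that descendantsD by fastforce
  then have disj: "disjoint_family_on (\<lambda>I. I) ?F"
    by (intro disjoint_maximal_cells) blast
  have F': "?F \<subseteq> F" unfolding maximal_cells_def by auto
  have cF: "countable ?F"
    using F F' by (intro countable_subset[OF _ countable_descendants[OF Q]]) auto
  have sets: "I \<in> sets m1" "I \<in> sets m2" if IF: "I \<in> ?F" for I
  proof -
    obtain k where "I \<in> D k" using cell F' IF by blast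
    then show "I \<in> sets m1" "I \<in> sets m2"
      using cell_borel sets_radon_measure[OF m1] sets_radon_measure[OF m2] by auto
  qed
  have "emeasure m1 (\<Union>F) = (\<integral>\<^sup>+I. emeasure m1 I \<partial>count_space ?F)"
    unfolding Union_maximal_cells[OF F]
    by (rule emeasure_UN_countable[OF _ cF disj]) (use sets in auto)
  also have "\<dots> \<le> (\<integral>\<^sup>+I. ennreal c * emeasure m2 I \<partial>count_space ?F)"
  proof (rule nn_integral_mono)
    fix I assume "I \<in> space (count_space ?F)"
    then have IF: "I \<in> F" using F' by auto
    then obtain k where Ik: "I \<in> D k" using cell by blast
    have "emeasure m1 I \<noteq> \<infinity>" "emeasure m2 I \<noteq> \<infinity>"
      using emeasure_cell_finite[OF m1 Ik] emeasure_cell_finite[OF m2 Ik] by auto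
    then show "emeasure m1 I \<le> ennreal c * emeasure m2 I"
      using emeasure_le_cmult_iff c le[OF IF] by blast
  qed
  also have "\<dots> = ennreal c * emeasure m2 (\<Union>I\<in>?F. I)"
    using emeasure_UN_countable[OF _ cF disj] sets by (simp add: nn_integral_cmult)
  also have "\<dots> \<le> ennreal c * emeasure m2 Q"
  proof (intro mult_left_mono emeasure_mono)
    show "(\<Union>I\<in>?F. I) \<subseteq> Q" using cell F' by blast
    show "Q \<in> sets m2" using cell_borel[OF Q] sets_radon_measure[OF m2] by simp
  qed simp
  finally show ?thesis .
qed

definition cells_where :: "real set \<Rightarrow> (real set \<Rightarrow> bool) \<Rightarrow> real set" where
  "cells_where Q P = \<Union>{I \<in> (\<Union>k. descendants 0 Q k). P I}"

lemma cells_where_borel: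
  assumes "Q \<in> D 0"
  shows "cells_where Q P \<in> sets borel"
proof -
  have "countable {I \<in> (\<Union>k. descendants 0 Q k). P I}"
    using countable_descendants[OF assms] by (rule countable_subset[rotated]) auto
  moreover have "I \<in> sets borel" if "I \<in> descendants 0 Q k" for I k
    using that descendantsD cell_borel by (metis add_0)
  ultimately show ?thesis unfolding cells_where_def by (intro sets.countable_Union) auto
qed

lemma emeasure_cells_where_le:
  assumes "radon_measure m1" "radon_measure m2" "Q \<in> D 0" "0 \<le> c"
    and "\<And>I. P I \<Longrightarrow> measure m1 I \<le> c * measure m2 I"
  shows "emeasure m1 (cells_where Q P) \<le> ennreal c * emeasure m2 Q"
  unfolding cells_where_def using assms by (intro emeasure_Union_cells_le) auto

lemma INT_cells_where_null:
  assumes m1: "radon_measure m1" and m2: "radon_measure m2" and Q: "Q \<in> D 0"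
    and le: "\<And>n I. P n I \<Longrightarrow> measure m1 I \<le> measure m2 I / real (Suc n)"
  shows "(\<Inter>n. cells_where Q (P n)) \<in> null_sets m1"
proof (rule INT_null_sets_of_le)
  fix n
  show "cells_where Q (P n) \<in> sets m1" using cells_where_borel[OF Q] sets_radon_measure[OF m1]
    by simp
  have "emeasure m1 (cells_where Q (P n)) \<le> ennreal (1 / real (Suc n)) * emeasure m2 Q"
    using le by (intro emeasure_cells_where_le[OF m1 m2 Q]) auto
  then show "emeasure m1 (cells_where Q (P n)) \<le> ennreal (measure m2 Q / real (Suc n))"
    using emeasure_cell_finite[OF m2 Q]
    by (simp add: emeasure_eq_ennreal_measure ennreal_mult'[symmetric])
qed

definition bounded_ratio :: "real measure \<Rightarrow> real measure \<Rightarrow> nat \<Rightarrow> real set \<Rightarrow> bool" where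
  "bounded_ratio mu nu n I \<longleftrightarrow> 0 < measure nu I \<and> 1 / real (Suc n) \<le> measure mu I / measure nu I
      \<and> measure mu I / measure nu I \<le> real (Suc n)"

definition bounded_points :: "real measure \<Rightarrow> real measure \<Rightarrow> real set \<Rightarrow> nat \<Rightarrow> real set" where
  "bounded_points mu nu Q n = {x \<in> Q. \<forall>k I. I \<in> D k \<longrightarrow> x \<in> I \<longrightarrow> bounded_ratio mu nu n I}"

lemma AE_bounded_points_square_function_finite:
  assumes mu_radon: "radon_measure mu" and nu_radon: "radon_measure nu" and C_ge_1: "1 \<le> C"
    and doubling: "\<And>k J P. J \<in> D (Suc k) \<Longrightarrow> P \<in> D k \<Longrightarrow> J \<subseteq> P \<Longrightarrow> measure nu P \<le> C * measure nu J"
    and Q: "Q \<in> D 0"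
  shows "AE x in mu. x \<in> bounded_points mu nu Q n \<longrightarrow> square_function D mu nu x < \<infinity>"
proof (cases "bounded_ratio mu nu n Q")
  case False
  then have "bounded_points mu nu Q n = {}"
    unfolding bounded_points_def using Q by blast
  then show ?thesis by simp
next
  case True
  interpret L: stopping_tree D mu nu Q C "1 / real (Suc n)" "real (Suc n)"
    using True by unfold_locales
      (auto simp: mu_radon nu_radon C_ge_1 doubling Q field_simps bounded_ratio_def)
  have "bounded_points mu nu Q n \<subseteq> L.tree_points"
    unfolding bounded_points_def L.tree_points_def L.good_def L.ratio_def bounded_ratio_def by auto
  then show ?thesis using L.AE_tree_points_square_function_finite by (auto elim: AE_mp)
qed

lemma not_bounded_points_subset:
  fixes mu nu :: "real measure" and Q :: "real set"
  defines "r \<equiv> \<lambda>I. measure mu I / measure nu I"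
  defines "Low \<equiv> \<lambda>n. cells_where Q (\<lambda>I. 0 < measure nu I \<and> r I < 1 / real (Suc n))"
    and "High \<equiv> \<lambda>n. cells_where Q (\<lambda>I. 0 < measure nu I \<and> real (Suc n) < r I)"
  assumes Q: "Q \<in> D 0" and xQ: "x \<in> Q" and x: "\<forall>n. x \<notin> bounded_points mu nu Q n"
  shows "x \<in> cells_where Q (\<lambda>I. measure nu I = 0) \<union> (\<Inter>n. Low n) \<union> (\<Inter>n. High n)"
proof -
  let ?Z = "cells_where Q (\<lambda>I. measure nu I = 0)"
  have bad: "x \<in> ?Z \<or> x \<in> Low n \<or> x \<in> High n" for n
  proof -
    obtain k I where I: "I \<in> D k" "x \<in> I" "\<not> bounded_ratio mu nu n I"
      using xQ x unfolding bounded_points_def by blast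
    have IQ: "I \<in> (\<Union>k. descendants 0 Q k)" using descendants_0_of_mem[OF Q I(1,2) xQ] by blast
    have "measure nu I = 0 \<or> (0 < measure nu I \<and> r I < 1 / real (Suc n))
      \<or> (0 < measure nu I \<and> real (Suc n) < r I)"
      using I(3) unfolding bounded_ratio_def r_def
      by (auto simp: less_le[of 0 "measure nu I"] not_le)
    moreover have mem: "x \<in> cells_where Q P" if "P I" for P
      using IQ I(2) that unfolding cells_where_def by blast
    ultimately show ?thesis unfolding Low_def High_def by (elim disjE) (auto intro: mem)
  qed
  have Low_mono: "Low m \<subseteq> Low n" and High_mono: "High m \<subseteq> High n" if "n \<le> m" for n m
  proof -
    have "1 / real (Suc m) \<le> 1 / real (Suc n)" using that by (simp add: frac_le)
    then show "Low m \<subseteq> Low n" unfolding Low_def cells_where_def by (force intro: less_le_trans)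
    show "High m \<subseteq> High n" unfolding High_def cells_where_def using that
      by (force intro: le_less_trans)
  qed
  show ?thesis
  proof (cases "x \<in> ?Z \<or> (\<forall>n. x \<in> Low n)")
    case False
    then obtain n0 where nZ: "x \<notin> ?Z" and n0: "x \<notin> Low n0" by blast
    have "x \<in> High n" for n
    proof -
      have "x \<notin> Low (max n n0)" using n0 Low_mono[of n0 "max n n0"] by auto
      then have "x \<in> High (max n n0)" using bad nZ by blast
      then show ?thesis using High_mono[of n "max n n0"] by auto
    qed
    then show ?thesis by blast
  qed auto
qed

lemma AE_exists_bounded_points:
  assumes mu_radon: "radon_measure mu" and nu_radon: "radon_measure nu" and Q: "Q \<in> D 0"
    and sets_ma: "sets ma = sets borel"
    and ac_nu: "absolutely_continuous nu ma" and ac_mu: "absolutely_continuous mu ma"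
  shows "AE x in ma. x \<in> Q \<longrightarrow> (\<exists>n. x \<in> bounded_points mu nu Q n)"
proof -
  let ?r = "\<lambda>I. measure mu I / measure nu I"
  have "cells_where Q (\<lambda>I. measure nu I = 0) \<in> null_sets nu"
    using emeasure_cells_where_le[OF nu_radon nu_radon Q order_refl, of "\<lambda>I. measure nu I = 0"]
      cells_where_borel[OF Q] sets_radon_measure[OF nu_radon] by (simp add: null_sets_def)
  moreover have "(\<Inter>n. cells_where Q (\<lambda>I. 0 < measure nu I
      \<and> ?r I < 1 / real (Suc n))) \<in> null_sets mu"
    by (rule INT_cells_where_null[OF mu_radon nu_radon Q]) (auto simp: field_simps)
  moreover have "(\<Inter>n. cells_where Q (\<lambda>I. 0 < measure nu I \<and> real (Suc n) < ?r I)) \<in> null_sets nu"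
    by (rule INT_cells_where_null[OF nu_radon mu_radon Q]) (auto simp: field_simps)
  ultimately have "cells_where Q (\<lambda>I. measure nu I = 0)
      \<union> (\<Inter>n. cells_where Q (\<lambda>I. 0 < measure nu I \<and> ?r I < 1 / real (Suc n)))
      \<union> (\<Inter>n. cells_where Q (\<lambda>I. 0 < measure nu I \<and> real (Suc n) < ?r I)) \<in> null_sets ma"
    using ac_nu ac_mu unfolding absolutely_continuous_def by (intro null_sets.Un) blast+
  then show ?thesis by (rule AE_I') (use not_bounded_points_subset[OF Q] in blast)
qed

lemma AE_unit_cell_square_function_finite:
  assumes "radon_measure mu" "radon_measure nu" and "1 \<le> C"
    and "\<And>k J P. J \<in> D (Suc k) \<Longrightarrow> P \<in> D k \<Longrightarrow> J \<subseteq> P \<Longrightarrow> measure nu P \<le> C * measure nu J"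
    and Q: "Q \<in> D 0" and sets_ma: "sets ma = sets borel"
    and ac_nu: "absolutely_continuous nu ma" and ac_mu: "absolutely_continuous mu ma"
  shows "AE x in ma. x \<in> Q \<longrightarrow> square_function D mu nu x < \<infinity>"
proof -
  have "AE x in ma. x \<in> bounded_points mu nu Q n \<longrightarrow> square_function D mu nu x < \<infinity>" for n
    using absolutely_continuous_AE[OF _ ac_mu]
      AE_bounded_points_square_function_finite[OF assms(1-5)]
      sets_ma assms(1) by (simp add: sets_radon_measure)
  then have "AE x in ma. \<forall>n. x \<in> bounded_points mu nu Q n \<longrightarrow> square_function D mu nu x < \<infinity>"
    by (subst AE_all_countable) blast
  with AE_exists_bounded_points[OF assms(1,2) Q sets_ma ac_nu ac_mu] show ?thesis
    by eventually_elim blast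
qed

lemma dyadically_doublingE:
  assumes "dyadically_doubling D nu" "radon_measure nu"
  obtains C where "1 \<le> C"
    "\<And>k J P. J \<in> D (Suc k) \<Longrightarrow> P \<in> D k \<Longrightarrow> J \<subseteq> P \<Longrightarrow> measure nu P \<le> C * measure nu J"
proof -
  obtain C0 where C0: "\<And>k J P. J \<in> D (Suc k) \<Longrightarrow> P \<in> D k \<Longrightarrow> J \<subseteq> P \<Longrightarrow>
      emeasure nu P \<le> ennreal C0 * emeasure nu J"
    using assms(1) unfolding dyadically_doubling_def by blast
  define C where "C = max C0 1"
  have "measure nu P \<le> C * measure nu J"
    if J: "J \<in> D (Suc k)" and P: "P \<in> D k" and JP: "J \<subseteq> P" for k J P
  proof -
    have "emeasure nu P \<le> ennreal C * emeasure nu J"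
      using C0[OF J P JP]
      by (rule order_trans) (auto simp: C_def intro!: mult_right_mono ennreal_leI)
    moreover have "emeasure nu P \<noteq> \<infinity>" "emeasure nu J \<noteq> \<infinity>"
      using emeasure_cell_finite[OF assms(2) P] emeasure_cell_finite[OF assms(2) J] by auto
    ultimately show ?thesis using emeasure_le_cmult_iff[of nu P nu J C] by (simp add: C_def)
  qed
  moreover have "1 \<le> C" by (simp add: C_def)
  ultimately show thesis using that by blast
qed

end

theorem mainTheorem10:
  fixes D :: "nat \<Rightarrow> real set set" and mu nu ma ms :: "real measure"
  assumes "dyadic_system D"
    and "radon_measure mu" and "radon_measure nu"
    and "emeasure mu UNIV < \<infinity>"
    and "dyadically_doubling D nu"
    and "lebesgue_decomposition nu mu ma ms"
  shows "AE x in ma. square_function D mu nu x < \<infinity>"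
proof -
  interpret dyadic D by (rule dyadic.intro) fact
  obtain C where C: "1 \<le> C"
    "\<And>k J P. J \<in> D (Suc k) \<Longrightarrow> P \<in> D k \<Longrightarrow> J \<subseteq> P \<Longrightarrow> measure nu P \<le> C * measure nu J"
    using dyadically_doublingE assms(3,5) by blast
  have sets_ma: "sets ma = sets borel" and ac_nu: "absolutely_continuous nu ma"
    using assms(6) unfolding lebesgue_decomposition_def by auto
  have ac_mu: "absolutely_continuous mu ma"
    using lebesgue_decomposition_absolutely_continuous assms(2,6) sets_radon_measure by blast
  have "AE x in ma. \<forall>Q\<in>D 0. x \<in> Q \<longrightarrow> square_function D mu nu x < \<infinity>"
    using AE_unit_cell_square_function_finite[OF assms(2,3) C _ sets_ma ac_nu ac_mu]
    by (intro AE_ball_countable' countable_cells_0)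
  then show ?thesis by eventually_elim (metis cell_exists)
qed

end
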